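(* Let $G(q)$ be a finite Chevalley group over $\mathbb{F}_q$ and let $P\subset G(q)$ be a proper parabolic subgroup. Then for any nonempty set $A\subseteq G(q)$ one has either $$|AP|\,|A\cap P| \ge 2^{-1}|A|^2 \quad\text{or}\quad |AP|\,|PA|\ge 2^{-2}|A||P|q.$$ In particular, $$\max\{|AP|,|PA|\}\ge 2^{-1}\min\{|A|^2|A\cap P|^{-1},\,(|A||P|q)^{1/2}\}$$ (with $|A|^2|A\cap P|^{-1}=+\infty$ when $A\cap P=\emptyset$). Similarly, $$|APA|\ge \frac{|P|}{4}\cdot\min\{q,\; |A|^4\sigma_P(A^{-1},A)^{-1}\sigma_P(A,A^{-1})^{-1}\}.$$ Moreover, if $B\subseteq P$ is a Borel subgroup with $P=BW_JB$ and $A\not\subseteq P$, then $|PAB|\ge q|P|$.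
   Context: $G(q)$ is a (possibly twisted) finite Chevalley group over the finite field $\mathbb{F}_q$ with its BN-pair structure (Borel subgroup $B$, Weyl group $W$); a parabolic subgroup is a subgroup containing a Borel subgroup, equivalently a conjugate of some $P_J=BW_JB$ where $W_J$ is the subgroup of $W$ generated by a subset $J$ of the fundamental reflections. For sets $X,Y$ in a group, $XY=\{xy\}$, $X^{-1}=\{x^{-1}\}$, $r_{XY}(z)$ is the number of pairs $(x,y)\in X\times Y$ with $xy=z$, and for a set $S$, $\sigma_S(X,Y)=\sum_{z\in S} r_{XY}(z)$. *)

theory Defs
  imports "HOL-Algebra.Algebra" "HOL-Computational_Algebra.Primes"
begin

definition rep_count :: "('a, 'b) monoid_scheme \<Rightarrow> 'a set \<Rightarrow> 'a set \<Rightarrow> 'a \<Rightarrow> nat" where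
  "rep_count G U V z = card {(x, y). x \<in> U \<and> y \<in> V \<and> x \<otimes>\<^bsub>G\<^esub> y = z}"

definition sigma_count :: "('a, 'b) monoid_scheme \<Rightarrow> 'a set \<Rightarrow> 'a set \<Rightarrow> 'a set \<Rightarrow> nat" where
  "sigma_count G S U V = (\<Sum>z\<in>S. rep_count G U V z)"

definition conj_set :: "('a, 'b) monoid_scheme \<Rightarrow> 'a \<Rightarrow> 'a set \<Rightarrow> 'a set" where
  "conj_set G g H = (g <#\<^bsub>G\<^esub> H) #>\<^bsub>G\<^esub> inv\<^bsub>G\<^esub> g"

text \<open>Tits system (BN-pair) (G,B,N,S): S is a set of representatives in N of the
  fundamental reflections generating W = N/(B \<inter> N).\<close>
definition tits_system :: "('a, 'b) monoid_scheme \<Rightarrow> 'a set \<Rightarrow> 'a set \<Rightarrow> 'a set \<Rightarrow> bool" where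
  "tits_system G B N S \<longleftrightarrow>
     group G \<and> subgroup B G \<and> subgroup N G \<and>
     generate G (B \<union> N) = carrier G \<and>
     (B \<inter> N) \<lhd> (G\<lparr>carrier := N\<rparr>) \<and>
     S \<subseteq> N \<and>
     (\<forall>s\<in>S. s \<notin> B \<inter> N \<and> s \<otimes>\<^bsub>G\<^esub> s \<in> B \<inter> N) \<and>
     generate (G\<lparr>carrier := N\<rparr> Mod (B \<inter> N)) ((\<lambda>s. (B \<inter> N) #>\<^bsub>G\<^esub> s) ` S)
        = carrier (G\<lparr>carrier := N\<rparr> Mod (B \<inter> N)) \<and>
     (\<forall>s\<in>S. \<forall>n\<in>N. ({s} <#>\<^bsub>G\<^esub> B) <#>\<^bsub>G\<^esub> {n} \<subseteq>
         ((B <#>\<^bsub>G\<^esub> {n}) <#>\<^bsub>G\<^esub> B) \<union> ((B <#>\<^bsub>G\<^esub> {s \<otimes>\<^bsub>G\<^esub> n}) <#>\<^bsub>G\<^esub> B)) \<and>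
     (\<forall>s\<in>S. conj_set G s B \<noteq> B)"

definition borel_subgroup :: "('a, 'b) monoid_scheme \<Rightarrow> 'a set \<Rightarrow> 'a set \<Rightarrow> bool" where
  "borel_subgroup G B Bo \<longleftrightarrow> (\<exists>g\<in>carrier G. Bo = conj_set G g B)"

definition parabolic_subgroup :: "('a, 'b) monoid_scheme \<Rightarrow> 'a set \<Rightarrow> 'a set \<Rightarrow> bool" where
  "parabolic_subgroup G B P \<longleftrightarrow> subgroup P G \<and> (\<exists>Bo. borel_subgroup G B Bo \<and> Bo \<subseteq> P)"

text \<open>Finite group with a BN-pair whose parameters over F_q satisfy
  |B s B| \<ge> q |B| for every fundamental reflection s (true for all finite
  (twisted) Chevalley groups G(q)).\<close>
definition finite_BN_group_over :: "('a, 'b) monoid_scheme \<Rightarrow> 'a set \<Rightarrow> 'a set \<Rightarrow> 'a set \<Rightarrow> nat \<Rightarrow> bool" where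
  "finite_BN_group_over G B N S q \<longleftrightarrow>
     tits_system G B N S \<and> finite (carrier G) \<and>
     (\<exists>p k. Factorial_Ring.prime (p::nat) \<and> k > 0 \<and> q = p ^ k) \<and>
     (\<forall>s\<in>S. card ((B <#>\<^bsub>G\<^esub> {s}) <#>\<^bsub>G\<^esub> B) \<ge> q * card B)"

end

theory Submission
  imports Defs
begin

text \<open>
  Let \<open>Bo \<subseteq> P\<close> be a Borel subgroup. The BN-pair axioms give, via the Bruhat decomposition and a
  representative of minimal length of \<open>B x P\<close> in \<open>N\<close>, that \<open>|B \<inter> x P x\<^sup>-\<^sup>1| \<le> |B \<inter> s B s\<^sup>-\<^sup>1|\<close>
  for a simple reflection \<open>s\<close> whenever \<open>x \<notin> P\<close>; since \<open>|B s B| \<ge> q |B|\<close>,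
  every double coset \<open>P g Bo\<close> with \<open>g \<notin> P\<close> has at least \<open>q |P|\<close> elements, and equivalently
  \<open>P \<inter> g\<^sup>-\<^sup>1 P g\<close> has index at least \<open>q\<close> in \<open>P\<close>.

  The rest is counting with this property, using Cauchy-Schwarz on the fibres of multiplication.
  For \<open>y \<notin> P\<close> the cosets \<open>y P\<close> and \<open>P y\<close> meet in \<open>y (P \<inter> y\<^sup>-\<^sup>1 P y)\<close>, so a right coset of \<open>P\<close>
  contains at most \<open>|P| / q\<close> elements of a left coset \<open>a P \<noteq> P\<close>. This bounds \<open>q |A \<inter> a P|\<close> by
  \<open>|PA|\<close> for \<open>a \<notin> P\<close>, hence \<open>q |A - P| |P|\<close> by \<open>|AP| |PA|\<close>, which gives the dichotomy and the
  bound on \<open>max |AP| |PA|\<close>. For \<open>|APA|\<close> one bounds the multiplicative energy of \<open>AP\<close> and \<open>PA\<close>: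
  pairs \<open>x, x'\<close> in \<open>AP\<close> with \<open>x\<^sup>-\<^sup>1 x' \<in> P\<close> are few, and for the others the translate
  \<open>x\<^sup>-\<^sup>1 x' PA\<close> meets \<open>PA\<close> in at most \<open>|PA|\<^sup>2 / (q |P|)\<close> points.
\<close>

section \<open>Counting fibres\<close>

lemma sum_sq_le_card_mult_sum_sq:
  fixes x :: "'u \<Rightarrow> real"
  assumes "finite U"
  shows "(\<Sum>u\<in>U. x u)^2 \<le> real (card U) * (\<Sum>u\<in>U. (x u)^2)"
proof -
  have "0 \<le> (\<Sum>u\<in>U. \<Sum>v\<in>U. (x u - x v)^2)" by (intro sum_nonneg) auto
  also have "\<dots> = (\<Sum>u\<in>U. \<Sum>v\<in>U. (x u)^2 + (x v)^2 - 2 * (x u * x v))"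
    by (intro sum.cong refl) (simp add: power2_diff)
  also have "\<dots> = (\<Sum>u\<in>U. real (card U) * (x u)^2 + (\<Sum>v\<in>U. (x v)^2) - 2 * x u * (\<Sum>v\<in>U. x v))"
    by (intro sum.cong refl) (simp add: sum_subtractf sum.distrib sum_distrib_left mult.assoc)
  also have "\<dots> = 2 * real (card U) * (\<Sum>u\<in>U. (x u)^2) - 2 * (\<Sum>u\<in>U. x u)^2"
    by (simp add: sum_subtractf sum.distrib sum_distrib_left[symmetric] sum_distrib_right[symmetric] power2_eq_square)
  finally show ?thesis by simp
qed

lemma card_eq_sum_card_fibres:
  assumes "finite T"
  shows "card T = (\<Sum>u\<in>f ` T. card {t \<in> T. f t = u})"
  using sum.image_gen[OF assms, of "\<lambda>_. 1::nat" f] by simp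

lemma card_eq_card_image_mult:
  assumes "finite T" and "\<And>u. u \<in> f ` T \<Longrightarrow> card {t \<in> T. f t = u} = c"
  shows "card T = card (f ` T) * c"
  using card_eq_sum_card_fibres[OF assms(1), of f] assms(2) by simp

lemma mult_card_le_card_image_mult:
  assumes "finite T" and "\<And>u. u \<in> f ` T \<Longrightarrow> k * card {t \<in> T. f t = u} \<le> c"
  shows "k * card T \<le> card (f ` T) * c"
proof -
  have "k * card T = (\<Sum>u\<in>f ` T. k * card {t \<in> T. f t = u})"
    by (simp add: card_eq_sum_card_fibres[OF assms(1), of f] sum_distrib_left)
  also have "\<dots> \<le> card (f ` T) * c"
    using sum_bounded_above[of "f ` T" "\<lambda>u. k * card {t \<in> T. f t = u}" c] assms(2) by simp
  finally show ?thesis .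
qed

lemma card_sq_le_card_image_mult_collisions:
  assumes "finite T"
  shows "card T ^ 2 \<le> card (f ` T) * card {(t, t'). t \<in> T \<and> t' \<in> T \<and> f t = f t'}"
proof -
  let ?F = "\<lambda>u. {t \<in> T. f t = u}"
  have "{(t, t'). t \<in> T \<and> t' \<in> T \<and> f t = f t'} = (\<Union>u\<in>f ` T. ?F u \<times> ?F u)" by auto
  also have "card \<dots> = (\<Sum>u\<in>f ` T. card (?F u \<times> ?F u))"
    by (rule card_UN_disjoint) (use assms in auto)
  finally have collisions:
    "card {(t, t'). t \<in> T \<and> t' \<in> T \<and> f t = f t'} = (\<Sum>u\<in>f ` T. card (?F u) ^ 2)"
    by (simp add: card_cartesian_product power2_eq_square)
  have "real (card T ^ 2) = (\<Sum>u\<in>f ` T. real (card (?F u)))\<^sup>2"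
    using card_eq_sum_card_fibres[OF assms, of f] by simp
  also have "\<dots> \<le> card (f ` T) * (\<Sum>u\<in>f ` T. (real (card (?F u)))\<^sup>2)"
    using assms by (intro sum_sq_le_card_mult_sum_sq) simp
  also have "\<dots> = real (card (f ` T) * card {(t, t'). t \<in> T \<and> t' \<in> T \<and> f t = f t'})"
    unfolding collisions by simp
  finally show ?thesis by linarith
qed

lemma sigma_count_eq_sum:
  assumes "finite S" "finite U" "finite V"
  shows "sigma_count G S U V = (\<Sum>u\<in>U. card {v \<in> V. u \<otimes>\<^bsub>G\<^esub> v \<in> S})"
proof -
  have "sigma_count G S U V = card (\<Union>z\<in>S. {(u, v). u \<in> U \<and> v \<in> V \<and> u \<otimes>\<^bsub>G\<^esub> v = z})"
    unfolding sigma_count_def rep_count_def using assms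
    by (subst card_UN_disjoint) (auto intro: finite_subset[of _ "U \<times> V"])
  also have "(\<Union>z\<in>S. {(u, v). u \<in> U \<and> v \<in> V \<and> u \<otimes>\<^bsub>G\<^esub> v = z})
      = (SIGMA u:U. {v \<in> V. u \<otimes>\<^bsub>G\<^esub> v \<in> S})" by auto
  finally show ?thesis using assms by simp
qed

section \<open>Multiplicative energy and double cosets\<close>

definition mult_energy :: "('a, 'b) monoid_scheme \<Rightarrow> 'a set \<Rightarrow> 'a set \<Rightarrow> nat" where
  "mult_energy G U V = card {((u, v), (u', v')).
     u \<in> U \<and> v \<in> V \<and> u' \<in> U \<and> v' \<in> V \<and> u \<otimes>\<^bsub>G\<^esub> v = u' \<otimes>\<^bsub>G\<^esub> v'}"

context group
begin

lemma inv_mult_cancel_left [simp]: "x \<in> carrier G \<Longrightarrow> y \<in> carrier G \<Longrightarrow> inv x \<otimes> (x \<otimes> y) = y"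
  by (simp add: m_assoc[symmetric])

lemma mult_inv_cancel_left [simp]: "x \<in> carrier G \<Longrightarrow> y \<in> carrier G \<Longrightarrow> x \<otimes> (inv x \<otimes> y) = y"
  by (simp add: m_assoc[symmetric])

lemma inv_mult_eq_mult_inv:
  assumes "a \<otimes> b = c \<otimes> d" "a \<in> carrier G" "b \<in> carrier G" "c \<in> carrier G" "d \<in> carrier G"
  shows "inv a \<otimes> c = b \<otimes> inv d"
proof -
  have "inv a \<otimes> c = inv a \<otimes> (c \<otimes> d) \<otimes> inv d" using assms(2-5) by (simp add: m_assoc)
  also have "\<dots> = b \<otimes> inv d" using assms by (simp flip: assms(1))
  finally show ?thesis .
qed

lemma subgroup_mult_mem_iff_left:
  assumes "subgroup H G" "h \<in> H" "g \<in> carrier G"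
  shows "g \<otimes> h \<in> H \<longleftrightarrow> g \<in> H"
proof
  assume "g \<otimes> h \<in> H"
  then have "g \<otimes> h \<otimes> inv h \<in> H" using assms by (auto intro: subgroup.m_closed subgroup.m_inv_closed)
  then show "g \<in> H" using assms by (simp add: m_assoc subgroup.mem_carrier)
qed (use assms in \<open>auto intro: subgroup.m_closed\<close>)

lemma subgroup_mult_mem_iff_right:
  assumes "subgroup H G" "h \<in> H" "g \<in> carrier G"
  shows "h \<otimes> g \<in> H \<longleftrightarrow> g \<in> H"
proof
  assume "h \<otimes> g \<in> H"
  then have "inv h \<otimes> (h \<otimes> g) \<in> H" using assms by (auto intro: subgroup.m_closed subgroup.m_inv_closed)
  then show "g \<in> H" using assms by (simp add: subgroup.mem_carrier)
qed (use assms in \<open>auto intro: subgroup.m_closed\<close>)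

lemma subgroup_conj_mem_iff:
  assumes "subgroup P G" "p \<in> P" "y \<in> carrier G"
  shows "inv p \<otimes> y \<otimes> p \<in> P \<longleftrightarrow> y \<in> P"
proof -
  have p: "p \<in> carrier G" "inv p \<in> P"
    using subgroup.mem_carrier[OF assms(1,2)] subgroup.m_inv_closed[OF assms(1,2)] .
  have "inv p \<otimes> y \<otimes> p \<in> P \<longleftrightarrow> inv p \<otimes> y \<in> P"
    using subgroup_mult_mem_iff_left[OF assms(1,2)] assms p by simp
  also have "\<dots> \<longleftrightarrow> y \<in> P" using subgroup_mult_mem_iff_right[OF assms(1) p(2) assms(3)] .
  finally show ?thesis .
qed

lemma set_mult_eq_image: "U <#> V = (\<lambda>(u, v). u \<otimes> v) ` (U \<times> V)"
  unfolding set_mult_def by auto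

lemma finite_set_mult: "finite U \<Longrightarrow> finite V \<Longrightarrow> finite (U <#> V)"
  unfolding set_mult_eq_image by simp

lemma set_inv_eq_image: "set_inv A = (\<lambda>a. inv a) ` A"
  unfolding SET_INV_def by auto

lemma conj_set_eq_image: "conj_set G c K = (\<lambda>k. c \<otimes> k \<otimes> inv c) ` K"
  unfolding conj_set_def l_coset_def r_coset_def by auto

lemma subgroup_conj_set: "subgroup K G \<Longrightarrow> c \<in> carrier G \<Longrightarrow> subgroup (conj_set G c K) G"
  using subgroup_conjugation_is_surj1[of "inv c" K] unfolding conj_set_def by simp

lemma card_conj_set: "K \<subseteq> carrier G \<Longrightarrow> c \<in> carrier G \<Longrightarrow> card (conj_set G c K) = card K"
  unfolding conj_set_eq_image by (rule card_image) (auto simp: inj_on_def subset_iff)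

lemma card_conj_set_inter_le:
  assumes "finite K" "K \<subseteq> carrier G" "c \<in> carrier G" "g \<in> carrier G"
  shows "card {k \<in> conj_set G c K. g \<otimes> k \<otimes> inv g \<in> P}
    \<le> card {b \<in> K. inv (inv c \<otimes> inv g \<otimes> c) \<otimes> b \<otimes> (inv c \<otimes> inv g \<otimes> c) \<in> conj_set G (inv c) P}"
proof -
  let ?x = "inv c \<otimes> inv g \<otimes> c"
  let ?K' = "{b \<in> K. inv ?x \<otimes> b \<otimes> ?x \<in> conj_set G (inv c) P}"
  have "{k \<in> conj_set G c K. g \<otimes> k \<otimes> inv g \<in> P} \<subseteq> (\<lambda>b. c \<otimes> b \<otimes> inv c) ` ?K'"
  proof
    fix k assume "k \<in> {k \<in> conj_set G c K. g \<otimes> k \<otimes> inv g \<in> P}"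
    then obtain b where b: "b \<in> K" "k = c \<otimes> b \<otimes> inv c" "g \<otimes> k \<otimes> inv g \<in> P"
      unfolding conj_set_eq_image by auto
    have "inv ?x \<otimes> b \<otimes> ?x = inv c \<otimes> (g \<otimes> k \<otimes> inv g) \<otimes> inv (inv c)"
      using b assms(2-4) by (auto simp: inv_mult_group m_assoc)
    then have "inv ?x \<otimes> b \<otimes> ?x \<in> conj_set G (inv c) P"
      using b(3) unfolding conj_set_eq_image by auto
    with b show "k \<in> (\<lambda>b. c \<otimes> b \<otimes> inv c) ` ?K'" by blast
  qed
  then have "card {k \<in> conj_set G c K. g \<otimes> k \<otimes> inv g \<in> P} \<le> card ((\<lambda>b. c \<otimes> b \<otimes> inv c) ` ?K')"
    using assms(1) by (intro card_mono) auto
  also have "\<dots> \<le> card ?K'" using assms(1) by (intro card_image_le) auto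
  finally show ?thesis .
qed

lemma card_double_coset_fibre:
  assumes "subgroup H G" "subgroup K G" "g \<in> carrier G" "h0 \<in> H" "k0 \<in> K"
  shows "card {(h, k). h \<in> H \<and> k \<in> K \<and> h \<otimes> g \<otimes> k = h0 \<otimes> g \<otimes> k0}
    = card {k \<in> K. g \<otimes> k \<otimes> inv g \<in> H}"
proof -
  let ?F = "{(h, k). h \<in> H \<and> k \<in> K \<and> h \<otimes> g \<otimes> k = h0 \<otimes> g \<otimes> k0}"
  let ?C = "{k \<in> K. g \<otimes> k \<otimes> inv g \<in> H}"
  let ?\<phi> = "\<lambda>(h, k). k \<otimes> inv k0"
  let ?\<psi> = "\<lambda>c. (h0 \<otimes> inv (g \<otimes> c \<otimes> inv g), c \<otimes> k0)"
  have HK: "H \<subseteq> carrier G" "K \<subseteq> carrier G" using assms(1,2) subgroup.subset by blast+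
  have c0: "h0 \<in> carrier G" "k0 \<in> carrier G" using assms(4,5) HK by auto
  have to_C: "?\<phi> t \<in> ?C \<and> ?\<psi> (?\<phi> t) = t" if t: "t \<in> ?F" for t
  proof -
    obtain h k where t_eq: "t = (h, k)" and hk: "h \<in> H" "k \<in> K" "h \<otimes> g \<otimes> k = h0 \<otimes> g \<otimes> k0"
      using t by auto
    have c: "h \<in> carrier G" "k \<in> carrier G" using hk HK by auto
    have "h \<otimes> (g \<otimes> (k \<otimes> inv k0) \<otimes> inv g) = (h \<otimes> g \<otimes> k) \<otimes> inv k0 \<otimes> inv g"
      using c c0 assms(3) by (simp add: m_assoc)
    also have "\<dots> = h0" unfolding hk(3) using c0 assms(3) by (simp add: m_assoc)
    finally have conj: "g \<otimes> (k \<otimes> inv k0) \<otimes> inv g = inv h \<otimes> h0"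
      using c c0 assms(3) by (simp add: inv_solve_left)
    have "k \<otimes> inv k0 \<in> K" "inv h \<otimes> h0 \<in> H"
      using hk assms by (auto intro: subgroup.m_closed subgroup.m_inv_closed)
    then show ?thesis using c c0 by (simp add: t_eq conj inv_mult_group m_assoc)
  qed
  have from_C: "?\<psi> c \<in> ?F \<and> ?\<phi> (?\<psi> c) = c" if c: "c \<in> ?C" for c
  proof -
    have "c \<in> carrier G" using c HK by auto
    moreover have "h0 \<otimes> inv (g \<otimes> c \<otimes> inv g) \<in> H" "c \<otimes> k0 \<in> K"
      using c assms by (auto intro: subgroup.m_closed subgroup.m_inv_closed)
    ultimately show ?thesis using c0 assms(3) by (simp add: m_assoc inv_mult_group)
  qed
  have "bij_betw ?\<phi> ?F ?C"
    by (rule bij_betw_byWitness[where f' = ?\<psi>]) (use to_C from_C in blast)+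
  then show ?thesis by (rule bij_betw_same_card)
qed

lemma card_double_coset:
  assumes "subgroup H G" "subgroup K G" "finite H" "finite K" "g \<in> carrier G"
  shows "card ((H #> g) <#> K) * card {k \<in> K. g \<otimes> k \<otimes> inv g \<in> H} = card H * card K"
proof -
  let ?f = "\<lambda>(h, k). h \<otimes> g \<otimes> k"
  have image: "?f ` (H \<times> K) = (H #> g) <#> K"
    unfolding r_coset_def set_mult_def by force
  have "card {t \<in> H \<times> K. ?f t = u} = card {k \<in> K. g \<otimes> k \<otimes> inv g \<in> H}"
    if u: "u \<in> ?f ` (H \<times> K)" for u
  proof -
    obtain h0 k0 where hk0: "h0 \<in> H" "k0 \<in> K" "u = h0 \<otimes> g \<otimes> k0" using u by auto
    have "{t \<in> H \<times> K. ?f t = u} = {(h, k). h \<in> H \<and> k \<in> K \<and> h \<otimes> g \<otimes> k = h0 \<otimes> g \<otimes> k0}"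
      using hk0(3) by auto
    then show ?thesis using card_double_coset_fibre[OF assms(1,2,5) hk0(1,2)] by simp
  qed
  then have "card (H \<times> K) = card (?f ` (H \<times> K)) * card {k \<in> K. g \<otimes> k \<otimes> inv g \<in> H}"
    using assms by (intro card_eq_card_image_mult) auto
  then show ?thesis using image by (simp add: card_cartesian_product)
qed

lemma card_translate_fibre_le:
  assumes "subgroup P G" "finite P" "Y \<subseteq> carrier G" "g \<in> carrier G" "v0 \<in> carrier G" "p0 \<in> P" "p0' \<in> P"
  shows "card {(v, p, p'). v \<in> Y \<and> p \<in> P \<and> p' \<in> P \<and> p \<otimes> v = p0 \<otimes> v0 \<and> p' \<otimes> g \<otimes> v = p0' \<otimes> g \<otimes> v0}
    \<le> card {p \<in> P. g \<otimes> p \<otimes> inv g \<in> P}"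
proof -
  let ?F = "{(v, p, p'). v \<in> Y \<and> p \<in> P \<and> p' \<in> P \<and> p \<otimes> v = p0 \<otimes> v0 \<and> p' \<otimes> g \<otimes> v = p0' \<otimes> g \<otimes> v0}"
  let ?\<psi> = "\<lambda>c. (c \<otimes> v0, p0 \<otimes> v0 \<otimes> inv (c \<otimes> v0), p0' \<otimes> g \<otimes> v0 \<otimes> inv (c \<otimes> v0) \<otimes> inv g)"
  have P: "p \<in> carrier G" if "p \<in> P" for p using that subgroup.mem_carrier[OF assms(1)] by blast
  show ?thesis
  proof (rule card_inj_on_le[where f = "\<lambda>(v, p, p'). v \<otimes> inv v0"])
    show "inj_on (\<lambda>(v, p, p'). v \<otimes> inv v0) ?F"
    proof (rule inj_on_inverseI[where g = ?\<psi>])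
      fix t assume "t \<in> ?F"
      then obtain v p p' where t: "t = (v, p, p')" and vp: "v \<in> carrier G" "p \<in> P" "p' \<in> P"
        and E: "p0 \<otimes> v0 = p \<otimes> v" "p0' \<otimes> g \<otimes> v0 = p' \<otimes> g \<otimes> v" using assms(3) by auto
      show "?\<psi> ((\<lambda>(v, p, p'). v \<otimes> inv v0) t) = t"
        unfolding t E using vp assms(4,5) by (simp add: P m_assoc)
    qed
    show "(\<lambda>(v, p, p'). v \<otimes> inv v0) ` ?F \<subseteq> {p \<in> P. g \<otimes> p \<otimes> inv g \<in> P}"
    proof
      fix c assume "c \<in> (\<lambda>(v, p, p'). v \<otimes> inv v0) ` ?F"
      then obtain v p p' where vp: "c = v \<otimes> inv v0" "v \<in> carrier G" "p \<in> P" "p' \<in> P"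
        "p \<otimes> v = p0 \<otimes> v0" "(p' \<otimes> g) \<otimes> v = (p0' \<otimes> g) \<otimes> v0" using assms(3) by auto
      then have c: "c = inv p \<otimes> p0" "c = inv (p' \<otimes> g) \<otimes> (p0' \<otimes> g)"
        using assms(4-7) by (auto simp: P intro!: inv_mult_eq_mult_inv[symmetric])
      have "g \<otimes> c \<otimes> inv g = inv p' \<otimes> p0'"
        unfolding c(2) using vp assms(4,7) by (simp add: P m_assoc inv_mult_group)
      with c(1) show "c \<in> {p \<in> P. g \<otimes> p \<otimes> inv g \<in> P}"
        using vp assms(1,6,7) by (auto intro: subgroup.m_closed subgroup.m_inv_closed)
    qed
  qed (use assms(2) in auto)
qed

lemma card_sq_le_card_set_mult_mult_energy:
  assumes "finite U" "finite V"
  shows "(card U * card V) ^ 2 \<le> card (U <#> V) * mult_energy G U V"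
proof -
  have "{(t, t'). t \<in> U \<times> V \<and> t' \<in> U \<times> V \<and> (\<lambda>(u, v). u \<otimes> v) t = (\<lambda>(u, v). u \<otimes> v) t'}
      = {((u, v), (u', v')). u \<in> U \<and> v \<in> V \<and> u' \<in> U \<and> v' \<in> V \<and> u \<otimes> v = u' \<otimes> v'}"
    by auto
  then show ?thesis
    using card_sq_le_card_image_mult_collisions[of "U \<times> V" "\<lambda>(u, v). u \<otimes> v"] assms
    unfolding set_mult_eq_image mult_energy_def by (simp add: card_cartesian_product)
qed

lemma mult_energy_le_sum_left:
  assumes "finite U" "finite V" "U \<subseteq> carrier G" "V \<subseteq> carrier G"
  shows "mult_energy G U V \<le> (\<Sum>u\<in>U. \<Sum>u'\<in>U. card {v \<in> V. inv u' \<otimes> u \<otimes> v \<in> V})"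
proof -
  let ?S = "SIGMA p:U \<times> U. {v \<in> V. inv (snd p) \<otimes> fst p \<otimes> v \<in> V}"
  let ?g = "\<lambda>((u, u'), v). ((u, v), (u', inv u' \<otimes> u \<otimes> v))"
  have "{((u, v), (u', v')). u \<in> U \<and> v \<in> V \<and> u' \<in> U \<and> v' \<in> V \<and> u \<otimes> v = u' \<otimes> v'}
      \<subseteq> ?g ` ?S"
  proof (clarify)
    fix u v u' v' assume quad: "u \<in> U" "v \<in> V" "u' \<in> U" "v' \<in> V" "u \<otimes> v = u' \<otimes> v'"
    then have "u \<in> carrier G" "v \<in> carrier G" "u' \<in> carrier G" "v' \<in> carrier G"
      using assms by auto
    with quad have v': "inv u' \<otimes> u \<otimes> v = v'" by (simp add: m_assoc inv_solve_left')
    have "((u, v), (u', v')) = ?g ((u, u'), v)" by (simp add: v')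
    moreover have "((u, u'), v) \<in> ?S" using quad(1-4) by (simp add: v')
    ultimately show "((u, v), (u', v')) \<in> ?g ` ?S" by (rule image_eqI)
  qed
  then have "mult_energy G U V \<le> card (?g ` ?S)"
    unfolding mult_energy_def using assms by (intro card_mono) auto
  also have "\<dots> \<le> card ?S" using assms by (intro card_image_le) auto
  also have "\<dots> = (\<Sum>u\<in>U. \<Sum>u'\<in>U. card {v \<in> V. inv u' \<otimes> u \<otimes> v \<in> V})"
    using assms by (simp add: sum.cartesian_product split_def)
  finally show ?thesis .
qed

lemma mult_energy_le_sum_right:
  assumes "finite U" "finite V" "U \<subseteq> carrier G" "V \<subseteq> carrier G"
  shows "mult_energy G U V \<le> (\<Sum>v\<in>V. \<Sum>v'\<in>V. card {u \<in> U. u \<otimes> v \<otimes> inv v' \<in> U})"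
proof -
  let ?S = "SIGMA p:V \<times> V. {u \<in> U. u \<otimes> fst p \<otimes> inv (snd p) \<in> U}"
  let ?g = "\<lambda>((v, v'), u). ((u, v), (u \<otimes> v \<otimes> inv v', v'))"
  have "{((u, v), (u', v')). u \<in> U \<and> v \<in> V \<and> u' \<in> U \<and> v' \<in> V \<and> u \<otimes> v = u' \<otimes> v'}
      \<subseteq> ?g ` ?S"
  proof (clarify)
    fix u v u' v' assume quad: "u \<in> U" "v \<in> V" "u' \<in> U" "v' \<in> V" "u \<otimes> v = u' \<otimes> v'"
    then have "u \<in> carrier G" "v \<in> carrier G" "u' \<in> carrier G" "v' \<in> carrier G"
      using assms by auto
    with quad have u': "u \<otimes> v \<otimes> inv v' = u'" by (simp add: inv_solve_right')
    have "((u, v), (u', v')) = ?g ((v, v'), u)" by (simp add: u')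
    moreover have "((v, v'), u) \<in> ?S" using quad(1-4) by (simp add: u')
    ultimately show "((u, v), (u', v')) \<in> ?g ` ?S" by (rule image_eqI)
  qed
  then have "mult_energy G U V \<le> card (?g ` ?S)"
    unfolding mult_energy_def using assms by (intro card_mono) auto
  also have "\<dots> \<le> card ?S" using assms by (intro card_image_le) auto
  also have "\<dots> = (\<Sum>v\<in>V. \<Sum>v'\<in>V. card {u \<in> U. u \<otimes> v \<otimes> inv v' \<in> U})"
    using assms by (simp add: sum.cartesian_product split_def)
  finally show ?thesis .
qed

lemma card_sq_mult_le_set_mult_subgroup_right:
  assumes "subgroup H G" "finite H" "finite U" "U \<subseteq> carrier G"
  shows "card U ^ 2 * card H \<le> card (U <#> H) * (\<Sum>x\<in>U. card {x' \<in> U. inv x \<otimes> x' \<in> H})"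
proof -
  have H: "H \<subseteq> carrier G" "card H > 0"
    using assms subgroup.subset subgroup.one_closed card_gt_0_iff by blast+
  have slice: "card {h \<in> H. inv x' \<otimes> x \<otimes> h \<in> H} = (if inv x' \<otimes> x \<in> H then card H else 0)"
    if "x \<in> U" "x' \<in> U" for x x'
  proof -
    have "inv x' \<otimes> x \<in> carrier G" using that assms(4) by auto
    then have "{h \<in> H. inv x' \<otimes> x \<otimes> h \<in> H} = (if inv x' \<otimes> x \<in> H then H else {})"
      using subgroup_mult_mem_iff_left[OF assms(1)] by auto
    then show ?thesis by simp
  qed
  have "mult_energy G U H \<le> (\<Sum>x\<in>U. \<Sum>x'\<in>U. card {h \<in> H. inv x' \<otimes> x \<otimes> h \<in> H})"
    using assms H by (intro mult_energy_le_sum_left) auto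
  also have "\<dots> = (\<Sum>x'\<in>U. \<Sum>x\<in>U. if inv x' \<otimes> x \<in> H then card H else 0)"
    by (subst sum.swap) (intro sum.cong refl; simp add: slice)
  also have "\<dots> = card H * (\<Sum>x'\<in>U. card {x \<in> U. inv x' \<otimes> x \<in> H})"
    using assms(3) by (simp add: sum.inter_filter[symmetric] sum_distrib_left mult.commute)
  finally have energy: "mult_energy G U H \<le> card H * (\<Sum>x\<in>U. card {x' \<in> U. inv x \<otimes> x' \<in> H})" .
  have "card H * (card U ^ 2 * card H) = (card U * card H) ^ 2" by (simp add: power2_eq_square)
  also have "\<dots> \<le> card (U <#> H) * mult_energy G U H"
    using assms by (intro card_sq_le_card_set_mult_mult_energy) auto
  also have "\<dots> \<le> card H * (card (U <#> H) * (\<Sum>x\<in>U. card {x' \<in> U. inv x \<otimes> x' \<in> H}))"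
    using energy by (simp add: mult_le_mono2 mult.left_commute)
  finally show ?thesis using H(2) by simp
qed

lemma card_sq_mult_le_set_mult_subgroup_left:
  assumes "subgroup H G" "finite H" "finite U" "U \<subseteq> carrier G"
  shows "card U ^ 2 * card H \<le> card (H <#> U) * (\<Sum>x\<in>U. card {x' \<in> U. x \<otimes> inv x' \<in> H})"
proof -
  have H: "H \<subseteq> carrier G" "card H > 0"
    using assms subgroup.subset subgroup.one_closed card_gt_0_iff by blast+
  have slice: "card {h \<in> H. h \<otimes> x \<otimes> inv x' \<in> H} = (if x \<otimes> inv x' \<in> H then card H else 0)"
    if "x \<in> U" "x' \<in> U" for x x'
  proof -
    have "x \<in> carrier G" "x' \<in> carrier G" using that assms(4) by auto
    then have "{h \<in> H. h \<otimes> x \<otimes> inv x' \<in> H} = (if x \<otimes> inv x' \<in> H then H else {})"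
      using subgroup_mult_mem_iff_right[OF assms(1)]
      by (auto simp: m_assoc subgroup.mem_carrier[OF assms(1)])
    then show ?thesis by simp
  qed
  have "mult_energy G H U \<le> (\<Sum>x\<in>U. \<Sum>x'\<in>U. card {h \<in> H. h \<otimes> x \<otimes> inv x' \<in> H})"
    using assms H by (intro mult_energy_le_sum_right) auto
  also have "\<dots> = (\<Sum>x\<in>U. \<Sum>x'\<in>U. if x \<otimes> inv x' \<in> H then card H else 0)"
    by (intro sum.cong refl) (simp add: slice)
  also have "\<dots> = card H * (\<Sum>x\<in>U. card {x' \<in> U. x \<otimes> inv x' \<in> H})"
    using assms(3) by (simp add: sum.inter_filter[symmetric] sum_distrib_left mult.commute)
  finally have energy: "mult_energy G H U \<le> card H * (\<Sum>x\<in>U. card {x' \<in> U. x \<otimes> inv x' \<in> H})" .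
  have "card H * (card U ^ 2 * card H) = (card H * card U) ^ 2" by (simp add: power2_eq_square)
  also have "\<dots> \<le> card (H <#> U) * mult_energy G H U"
    using assms by (intro card_sq_le_card_set_mult_mult_energy) auto
  also have "\<dots> \<le> card H * (card (H <#> U) * (\<Sum>x\<in>U. card {x' \<in> U. x \<otimes> inv x' \<in> H}))"
    using energy by (simp add: mult_le_mono2 mult.left_commute)
  finally show ?thesis using H(2) by simp
qed

lemma sigma_count_set_inv_left:
  assumes "finite S" "finite A" "A \<subseteq> carrier G"
  shows "sigma_count G S (set_inv A) A = (\<Sum>a\<in>A. card {a' \<in> A. inv a \<otimes> a' \<in> S})"
proof -
  have "inj_on (\<lambda>a. inv a) A" using assms(3) by (auto simp: inj_on_def)
  then show ?thesis
    using assms by (simp add: sigma_count_eq_sum set_inv_eq_image sum.reindex)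
qed

lemma sigma_count_set_inv_right:
  assumes "finite S" "finite A" "A \<subseteq> carrier G"
  shows "sigma_count G S A (set_inv A) = (\<Sum>a\<in>A. card {a' \<in> A. a \<otimes> inv a' \<in> S})"
proof -
  have "card {u \<in> (\<lambda>a. inv a) ` A. a \<otimes> u \<in> S} = card {a' \<in> A. a \<otimes> inv a' \<in> S}" for a
  proof -
    have "{u \<in> (\<lambda>a. inv a) ` A. a \<otimes> u \<in> S} = (\<lambda>a. inv a) ` {a' \<in> A. a \<otimes> inv a' \<in> S}" by auto
    moreover have "inj_on (\<lambda>a. inv a) {a' \<in> A. a \<otimes> inv a' \<in> S}" using assms(3) by (auto simp: inj_on_def)
    ultimately show ?thesis by (simp add: card_image)
  qed
  then show ?thesis using assms by (simp add: sigma_count_eq_sum set_inv_eq_image)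
qed

lemma card_sq_mult_le_set_mult_sigma_count_right:
  assumes "subgroup H G" "finite H" "finite A" "A \<subseteq> carrier G"
  shows "card A ^ 2 * card H \<le> card (A <#> H) * sigma_count G H (set_inv A) A"
  using card_sq_mult_le_set_mult_subgroup_right[OF assms] sigma_count_set_inv_left[OF assms(2-4)]
  by simp

lemma card_sq_mult_le_set_mult_sigma_count_left:
  assumes "subgroup H G" "finite H" "finite A" "A \<subseteq> carrier G"
  shows "card A ^ 2 * card H \<le> card (H <#> A) * sigma_count G H A (set_inv A)"
  using card_sq_mult_le_set_mult_subgroup_left[OF assms] sigma_count_set_inv_right[OF assms(2-4)]
  by simp

end

section \<open>Almost malnormal subgroups\<close>

lemma quarter_min_le_of_energy_bounds:
  fixes a n q z s M :: real
  assumes "0 < a" "0 < n" "0 < q" "0 < z" "0 \<le> M"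
    and coset_pairs: "a ^ 4 * n ^ 2 \<le> z * s"
    and energy: "q * n * z ^ 2 \<le> M * (q * n ^ 2 * z + z ^ 2)"
  shows "n / 4 * min q (a ^ 4 / s) \<le> M"
proof -
  define m where "m = min q (a ^ 4 / s)"
  have "0 < a ^ 4 * n ^ 2" using assms(1,2) by simp
  then have "0 < z * s" using coset_pairs by linarith
  then have "0 < s" using assms(4) by (simp add: zero_less_mult_iff)
  have "z * (q * n * z) \<le> z * (M * (q * n ^ 2 + z))"
    using energy by (simp add: power2_eq_square algebra_simps)
  then have reduced: "q * n * z \<le> M * (q * n ^ 2 + z)" using assms(4) by simp
  have "n * m \<le> 2 * M"
  proof (cases "z \<le> q * n ^ 2")
    case True
    note reduced
    also have "M * (q * n ^ 2 + z) \<le> M * (2 * (q * n ^ 2))"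
      using True assms(5) by (intro mult_left_mono) auto
    also have "\<dots> = q * n * (2 * M * n)" by (simp add: power2_eq_square algebra_simps)
    finally have "z \<le> 2 * M * n" using assms(2,3) by simp
    then have "z * s \<le> 2 * M * n * s" using \<open>0 < s\<close> by (intro mult_right_mono) auto
    with coset_pairs have "n * (a ^ 4 * n) \<le> n * (2 * M * s)" by (simp add: power2_eq_square algebra_simps)
    then have "n * (a ^ 4 / s) \<le> 2 * M"
      using assms(2) \<open>0 < s\<close> by (simp add: field_simps)
    moreover have "n * m \<le> n * (a ^ 4 / s)"
      unfolding m_def using assms(2) by (intro mult_left_mono) auto
    ultimately show ?thesis by linarith
  next
    case False
    note reduced
    also have "M * (q * n ^ 2 + z) \<le> M * (2 * z)"
      using False assms(5) by (intro mult_left_mono) auto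
    finally have "n * q \<le> 2 * M" using assms(4) by (simp add: mult.commute)
    moreover have "n * m \<le> n * q"
      unfolding m_def using assms(2) by (intro mult_left_mono) auto
    ultimately show ?thesis by linarith
  qed
  then show ?thesis unfolding m_def using assms(5) by simp
qed

text \<open>Malnormal subgroups are the extreme case \<open>q = |P|\<close> of the index bound assumed here.\<close>

locale almost_malnormal = group G for G (structure) +
  fixes P :: "'a set" and q :: nat
  assumes subgroup_P: "subgroup P G" and finite_P: "finite P" and q_pos: "0 < q"
    and card_conj_inter_le:
      "\<lbrakk>g \<in> carrier G; g \<notin> P\<rbrakk> \<Longrightarrow> q * card {p \<in> P. g \<otimes> p \<otimes> inv g \<in> P} \<le> card P"
begin

lemma P_carrier: "P \<subseteq> carrier G"
  using subgroup.subset[OF subgroup_P] .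

lemma card_P_pos: "0 < card P"
  using finite_P subgroup.one_closed[OF subgroup_P] card_gt_0_iff by blast

lemma card_l_coset_inter_r_coset_le:
  assumes "y \<in> carrier G" "y \<notin> P"
  shows "q * card ((y <# P) \<inter> (P #> y)) \<le> card P"
proof -
  have "(y <# P) \<inter> (P #> y) \<subseteq> (\<lambda>p. y \<otimes> p) ` {p \<in> P. y \<otimes> p \<otimes> inv y \<in> P}"
  proof
    fix z assume "z \<in> (y <# P) \<inter> (P #> y)"
    then obtain p p' where p: "p \<in> P" "p' \<in> P" "z = y \<otimes> p" "y \<otimes> p = p' \<otimes> y"
      unfolding l_coset_def r_coset_def by auto
    then have "y \<otimes> p \<otimes> inv y = p'" using assms(1) P_carrier by (auto simp: m_assoc)
    then have "p \<in> {p \<in> P. y \<otimes> p \<otimes> inv y \<in> P}" using p by simp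
    then show "z \<in> (\<lambda>p. y \<otimes> p) ` {p \<in> P. y \<otimes> p \<otimes> inv y \<in> P}" using p(3) by (rule rev_image_eqI)
  qed
  then have "card ((y <# P) \<inter> (P #> y)) \<le> card ((\<lambda>p. y \<otimes> p) ` {p \<in> P. y \<otimes> p \<otimes> inv y \<in> P})"
    using finite_P by (intro card_mono) auto
  also have "\<dots> \<le> card {p \<in> P. y \<otimes> p \<otimes> inv y \<in> P}" using finite_P by (intro card_image_le) auto
  finally have "q * card ((y <# P) \<inter> (P #> y)) \<le> q * card {p \<in> P. y \<otimes> p \<otimes> inv y \<in> P}"
    by (rule mult_le_mono2)
  then show ?thesis using card_conj_inter_le[OF assms] by linarith
qed

lemma card_inter_l_coset_le:
  assumes "finite A" "A \<subseteq> carrier G" "a \<in> A" "a \<notin> P"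
  shows "q * card {a' \<in> A. inv a \<otimes> a' \<in> P} \<le> card (P <#> A)"
proof -
  let ?Y = "{a' \<in> A. inv a \<otimes> a' \<in> P}"
  have Y: "finite ?Y" "?Y \<subseteq> carrier G" using assms by auto
  have a: "a \<in> carrier G" using assms by auto
  have slice: "q * card {y' \<in> ?Y. y \<otimes> inv y' \<in> P} \<le> card P" if y: "y \<in> ?Y" for y
  proof -
    have yc: "y \<in> carrier G" using y assms by auto
    have "y \<notin> P"
    proof
      assume "y \<in> P"
      then have "inv (inv a \<otimes> y \<otimes> inv y) \<in> P"
        using y subgroup_P by (auto intro: subgroup.m_closed subgroup.m_inv_closed)
      then show False using assms(4) a yc by (simp add: m_assoc)
    qed
    have "{y' \<in> ?Y. y \<otimes> inv y' \<in> P} \<subseteq> (y <# P) \<inter> (P #> y)"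
    proof clarify
      fix y' assume y': "y' \<in> A" "inv a \<otimes> y' \<in> P" "y \<otimes> inv y' \<in> P"
      have y'c: "y' \<in> carrier G" using y' assms by auto
      have "inv (inv a \<otimes> y) \<otimes> (inv a \<otimes> y') \<in> P" "inv (y \<otimes> inv y') \<in> P"
        using y y' subgroup_P by (auto intro: subgroup.m_closed subgroup.m_inv_closed)
      then have "inv y \<otimes> y' \<in> P" "y' \<otimes> inv y \<in> P" using a yc y'c by (simp_all add: inv_mult_group m_assoc)
      then have "y' \<in> y <# P" "y' \<in> P #> y"
        using subgroup.lcos_module_rev[OF subgroup_P is_group yc y'c]
          subgroup.rcos_module_rev[OF subgroup_P is_group yc y'c] by auto
      then show "y' \<in> (y <# P) \<inter> (P #> y)" ..
    qed
    moreover have "finite ((y <# P) \<inter> (P #> y))" unfolding l_coset_def using finite_P by auto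
    ultimately have "card {y' \<in> ?Y. y \<otimes> inv y' \<in> P} \<le> card ((y <# P) \<inter> (P #> y))" by (rule card_mono[rotated])
    then show ?thesis using card_l_coset_inter_r_coset_le[OF yc \<open>y \<notin> P\<close>] by (meson le_trans mult_le_mono2)
  qed
  have "q * (card ?Y ^ 2 * card P) \<le> card (P <#> ?Y) * (q * (\<Sum>y\<in>?Y. card {y' \<in> ?Y. y \<otimes> inv y' \<in> P}))"
    using card_sq_mult_le_set_mult_subgroup_left[OF subgroup_P finite_P Y] by (simp add: mult.left_commute)
  also have "\<dots> \<le> card (P <#> A) * (card ?Y * card P)"
  proof (rule mult_le_mono)
    show "card (P <#> ?Y) \<le> card (P <#> A)"
      using assms by (intro card_mono finite_set_mult finite_P mono_set_mult) auto
    show "q * (\<Sum>y\<in>?Y. card {y' \<in> ?Y. y \<otimes> inv y' \<in> P}) \<le> card ?Y * card P"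
      using sum_bounded_above[of ?Y "\<lambda>y. q * card {y' \<in> ?Y. y \<otimes> inv y' \<in> P}" "card P"] slice
      by (simp add: sum_distrib_left)
  qed
  finally have "(card ?Y * card P) * (q * card ?Y) \<le> (card ?Y * card P) * card (P <#> A)"
    by (simp add: power2_eq_square ac_simps)
  then show ?thesis using card_P_pos by (cases "card ?Y = 0") auto
qed

lemma card_diff_mult_le:
  assumes "finite A" "A \<subseteq> carrier G"
  shows "q * card (A - P) * card P \<le> card (A <#> P) * card (P <#> A)"
proof -
  let ?X = "A - P"
  have X: "finite ?X" "?X \<subseteq> carrier G" using assms by auto
  have slice: "q * card {x' \<in> ?X. inv x \<otimes> x' \<in> P} \<le> card (P <#> A)" if "x \<in> ?X" for x
  proof -
    have "card {x' \<in> ?X. inv x \<otimes> x' \<in> P} \<le> card {a' \<in> A. inv x \<otimes> a' \<in> P}"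
      using assms by (intro card_mono) auto
    then show ?thesis
      using card_inter_l_coset_le[OF assms, of x] that by (meson le_trans mult_le_mono2 DiffE)
  qed
  have "q * (card ?X ^ 2 * card P) \<le> card (?X <#> P) * (q * (\<Sum>x\<in>?X. card {x' \<in> ?X. inv x \<otimes> x' \<in> P}))"
    using card_sq_mult_le_set_mult_subgroup_right[OF subgroup_P finite_P X]
    by (simp add: mult.left_commute)
  also have "\<dots> \<le> card (A <#> P) * (card ?X * card (P <#> A))"
  proof (rule mult_le_mono)
    show "card (?X <#> P) \<le> card (A <#> P)"
      using assms by (intro card_mono finite_set_mult finite_P mono_set_mult) auto
    show "q * (\<Sum>x\<in>?X. card {x' \<in> ?X. inv x \<otimes> x' \<in> P}) \<le> card ?X * card (P <#> A)"
      using sum_bounded_above[of ?X "\<lambda>x. q * card {x' \<in> ?X. inv x \<otimes> x' \<in> P}"] slice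
      by (simp add: sum_distrib_left)
  qed
  finally have "card ?X * (q * card ?X * card P) \<le> card ?X * (card (A <#> P) * card (P <#> A))"
    by (simp add: power2_eq_square ac_simps)
  then show ?thesis by (cases "card ?X = 0") auto
qed

lemma card_translate_inter_le:
  assumes "finite Y" "Y \<subseteq> carrier G" "P <#> Y \<subseteq> Y" "g \<in> carrier G" "g \<notin> P"
  shows "q * card P * card {v \<in> Y. g \<otimes> v \<in> Y} \<le> card Y ^ 2"
proof -
  let ?T = "{v \<in> Y. g \<otimes> v \<in> Y} \<times> P \<times> P"
  let ?f = "\<lambda>(v, p, p'). (p \<otimes> v, p' \<otimes> g \<otimes> v)"
  have into_Y: "p \<otimes> v \<in> Y" if "p \<in> P" "v \<in> Y" for p v
    using that assms(3) unfolding set_mult_def by auto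
  have "?f ` ?T \<subseteq> Y \<times> Y"
    using into_Y assms(2,4) P_carrier by (auto simp: m_assoc subset_iff)
  then have image: "card (?f ` ?T) \<le> card (Y \<times> Y)" using assms(1) by (intro card_mono) auto
  have "q * card {t \<in> ?T. ?f t = u} \<le> card P" if u: "u \<in> ?f ` ?T" for u
  proof -
    obtain v0 p0 p0' where t0: "v0 \<in> Y" "p0 \<in> P" "p0' \<in> P" "u = ?f (v0, p0, p0')" using u by auto
    let ?F = "{(v, p, p'). v \<in> Y \<and> p \<in> P \<and> p' \<in> P \<and> p \<otimes> v = p0 \<otimes> v0 \<and> p' \<otimes> g \<otimes> v = p0' \<otimes> g \<otimes> v0}"
    have "finite ?F" by (rule finite_subset[of _ "Y \<times> P \<times> P"]) (use assms(1) finite_P in auto)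
    moreover have "{t \<in> ?T. ?f t = u} \<subseteq> ?F" using t0(4) by auto
    ultimately have "card {t \<in> ?T. ?f t = u} \<le> card ?F" by (rule card_mono)
    also have "\<dots> \<le> card {p \<in> P. g \<otimes> p \<otimes> inv g \<in> P}"
      using t0(1) assms(2) by (intro card_translate_fibre_le subgroup_P finite_P assms(2,4) t0(2,3)) auto
    finally show ?thesis using card_conj_inter_le[OF assms(4,5)] by (meson le_trans mult_le_mono2)
  qed
  then have "q * card ?T \<le> card (?f ` ?T) * card P"
    using assms(1) finite_P by (intro mult_card_le_card_image_mult) auto
  also have "\<dots> \<le> card (Y \<times> Y) * card P" using image by (rule mult_le_mono1)
  finally have "card P * (q * card P * card {v \<in> Y. g \<otimes> v \<in> Y}) \<le> card P * card Y ^ 2"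
    by (simp add: card_cartesian_product power2_eq_square ac_simps)
  then show ?thesis using card_P_pos by simp
qed

lemma mult_energy_le_of_left_invariant:
  assumes "finite U" "U \<subseteq> carrier G" "finite V" "V \<subseteq> carrier G" "P <#> V \<subseteq> V"
  shows "q * card P * mult_energy G U V \<le> q * card P ^ 2 * card U * card V + card U ^ 2 * card V ^ 2"
proof -
  let ?c = "\<lambda>u u'. card {v \<in> V. inv u' \<otimes> u \<otimes> v \<in> V}"
  let ?b = "q * card P * card V"
  have summand: "q * card P * ?c u u' \<le> (if inv u' \<otimes> u \<in> P then ?b else 0) + card V ^ 2"
    if "u \<in> U" "u' \<in> U" for u u'
  proof (cases "inv u' \<otimes> u \<in> P")
    case True
    have "?c u u' \<le> card V" using assms(3) by (intro card_mono) auto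
    then have "q * card P * ?c u u' \<le> ?b" by simp
    with True show ?thesis by (simp add: trans_le_add1)
  next
    case False
    have "inv u' \<otimes> u \<in> carrier G" using that assms(2) by auto
    with False show ?thesis using card_translate_inter_le[OF assms(3-5)] by simp
  qed
  have same_coset: "card {u' \<in> U. inv u' \<otimes> u \<in> P} \<le> card P" if "u \<in> U" for u
  proof (rule card_inj_on_le[where f = "\<lambda>u'. inv u' \<otimes> u"])
    show "inj_on (\<lambda>u'. inv u' \<otimes> u) {u' \<in> U. inv u' \<otimes> u \<in> P}"
      using that assms(2) inv_inj by (intro inj_onI) (auto simp: inj_on_def subset_iff)
  qed (use finite_P in auto)
  have "q * card P * mult_energy G U V \<le> q * card P * (\<Sum>u\<in>U. \<Sum>u'\<in>U. ?c u u')"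
    using mult_energy_le_sum_left[OF assms(1,3,2,4)] by simp
  also have "\<dots> \<le> (\<Sum>u\<in>U. \<Sum>u'\<in>U. (if inv u' \<otimes> u \<in> P then ?b else 0) + card V ^ 2)"
    unfolding sum_distrib_left using summand by (intro sum_mono) auto
  also have "\<dots> = ?b * (\<Sum>u\<in>U. card {u' \<in> U. inv u' \<otimes> u \<in> P}) + card U ^ 2 * card V ^ 2"
    using assms(1) by (simp add: sum.distrib sum.inter_filter[symmetric] sum_distrib_left power2_eq_square mult.commute)
  also have "\<dots> \<le> ?b * (card U * card P) + card U ^ 2 * card V ^ 2"
    using sum_bounded_above[of U "\<lambda>u. card {u' \<in> U. inv u' \<otimes> u \<in> P}" "card P"] same_coset
    by simp
  finally show ?thesis by (simp add: power2_eq_square ac_simps)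
qed

lemma subset_set_mult_P: "A \<subseteq> carrier G \<Longrightarrow> A \<subseteq> A <#> P \<and> A \<subseteq> P <#> A"
  using subgroup.one_closed[OF subgroup_P] unfolding set_mult_def by force

lemma card_set_mult_dichotomy:
  assumes "finite A" "A \<subseteq> carrier G"
  shows "real (card (A <#> P)) * real (card (A \<inter> P)) \<ge> real (card A) ^ 2 / 2
    \<or> real (card (A <#> P)) * real (card (P <#> A)) \<ge> real (card A) * real (card P) * real q / 4"
proof (cases "2 * card (A \<inter> P) \<ge> card A")
  case True
  have "card A \<le> card (A <#> P)"
    using assms subset_set_mult_P by (intro card_mono finite_set_mult finite_P) auto
  with True have "real (card A) * real (card A) \<le> real (card (A <#> P)) * (2 * real (card (A \<inter> P)))"
    by (intro mult_mono) auto
  then show ?thesis by (simp add: power2_eq_square)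
next
  case False
  have "card (A \<inter> P) + card (A - P) = card A" using assms(1) by (metis card_Int_Diff)
  with False have "real (card A) \<le> 2 * real (card (A - P))" by linarith
  then have "real (card A) * (real q * real (card P)) \<le> 2 * real (card (A - P)) * (real q * real (card P))"
    by (rule mult_right_mono) simp
  then have "real (card A) * real (card P) * real q \<le> 2 * (real q * real (card (A - P)) * real (card P))"
    by (simp add: ac_simps)
  also have "\<dots> \<le> 2 * (real (card (A <#> P)) * real (card (P <#> A)))"
    using card_diff_mult_le[OF assms] by (simp flip: of_nat_mult)
  moreover have "0 \<le> real (card (A <#> P)) * real (card (P <#> A))" by simp
  ultimately have "real (card A) * real (card P) * real q / 4 \<le> real (card (A <#> P)) * real (card (P <#> A))"
    by linarith
  then show ?thesis ..
qed

lemma max_card_set_mult_ge: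
  assumes "finite A" "A \<subseteq> carrier G" "A \<noteq> {}"
  shows "real (max (card (A <#> P)) (card (P <#> A))) \<ge>
    (if A \<inter> P = {} then sqrt (real (card A) * real (card P) * real q) / 2
     else min (real (card A) ^ 2 / real (card (A \<inter> P))) (sqrt (real (card A) * real (card P) * real q)) / 2)"
proof -
  let ?m = "real (max (card (A <#> P)) (card (P <#> A)))"
  let ?s = "sqrt (real (card A) * real (card P) * real q)"
  consider "real (card (A <#> P)) * real (card (A \<inter> P)) \<ge> real (card A) ^ 2 / 2"
    | "real (card (A <#> P)) * real (card (P <#> A)) \<ge> real (card A) * real (card P) * real q / 4"
    using card_set_mult_dichotomy[OF assms(1,2)] by blast
  then show ?thesis
  proof cases
    case 1
    have "A \<inter> P \<noteq> {}" using 1 assms(1,3) by auto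
    then have "0 < real (card (A \<inter> P))" using assms(1) by (simp add: card_gt_0_iff)
    then have "real (card A) ^ 2 / real (card (A \<inter> P)) / 2 \<le> real (card (A <#> P))"
      using 1 by (simp add: field_simps)
    also have "\<dots> \<le> ?m" by simp
    moreover have "min (real (card A) ^ 2 / real (card (A \<inter> P))) ?s / 2
        \<le> real (card A) ^ 2 / real (card (A \<inter> P)) / 2" by simp
    ultimately show ?thesis using \<open>A \<inter> P \<noteq> {}\<close> by simp
  next
    case 2
    have "real (card (A <#> P)) * real (card (P <#> A)) \<le> ?m ^ 2"
      by (simp add: power2_eq_square mult_mono)
    with 2 have "?s \<le> sqrt ((2 * ?m) ^ 2)" by (intro real_sqrt_le_mono) (simp add: power_mult_distrib)
    also have "\<dots> = 2 * ?m" by (rule real_sqrt_abs[THEN trans]) simp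
    finally have "?s / 2 \<le> ?m" by simp
    moreover have "min (real (card A) ^ 2 / real (card (A \<inter> P))) ?s / 2 \<le> ?s / 2" by simp
    ultimately show ?thesis by (auto simp: min_le_iff_disj)
  qed
qed

lemma card_set_mult_set_mult_energy_bound:
  assumes "finite A" "A \<subseteq> carrier G"
  shows "q * card P * (card (A <#> P) * card (P <#> A)) ^ 2 \<le> card ((A <#> P) <#> A)
    * (q * card P ^ 2 * card (A <#> P) * card (P <#> A) + (card (A <#> P) * card (P <#> A)) ^ 2)"
proof -
  let ?AP = "A <#> P" and ?PA = "P <#> A"
  have AP: "finite ?AP" "?AP \<subseteq> carrier G" and PA: "finite ?PA" "?PA \<subseteq> carrier G"
    using assms finite_P P_carrier by (simp_all add: finite_set_mult set_mult_closed)
  have "P <#> ?PA \<subseteq> ?PA"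
    using assms(2) P_carrier by (simp add: set_mult_assoc[symmetric] subgroup_mult_id[OF subgroup_P])
  note energy = mult_energy_le_of_left_invariant[OF AP PA this]
  have "?AP <#> ?PA = (A <#> P) <#> A"
    using assms(2) P_carrier
    by (simp add: set_mult_assoc set_mult_closed subgroup_mult_id[OF subgroup_P] flip: set_mult_assoc[of P P A])
  then have "(card ?AP * card ?PA) ^ 2 \<le> card ((A <#> P) <#> A) * mult_energy G ?AP ?PA"
    using card_sq_le_card_set_mult_mult_energy[OF AP(1) PA(1)] by simp
  then have "q * card P * (card ?AP * card ?PA) ^ 2 \<le> card ((A <#> P) <#> A) * (q * card P * mult_energy G ?AP ?PA)"
    by (simp add: mult.left_commute)
  also have "\<dots> \<le> card ((A <#> P) <#> A) * (q * card P ^ 2 * card ?AP * card ?PA + card ?AP ^ 2 * card ?PA ^ 2)"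
    using energy by simp
  finally show ?thesis by (simp add: power_mult_distrib)
qed

lemma card_set_mult_set_mult_ge:
  assumes "finite A" "A \<subseteq> carrier G" "A \<noteq> {}"
  shows "real (card ((A <#> P) <#> A)) \<ge> real (card P) / 4 * min (real q)
    (real (card A) ^ 4 / (real (sigma_count G P (set_inv A) A) * real (sigma_count G P A (set_inv A))))"
proof -
  let ?AP = "A <#> P" and ?PA = "P <#> A"
  have "card A \<le> card ?AP" "card A \<le> card ?PA"
    using subset_set_mult_P[OF assms(2)] assms(1) finite_P by (simp_all add: card_mono finite_set_mult)
  then have pos: "0 < card A" "0 < card ?AP" "0 < card ?PA"
    using assms(1,3) finite_set_mult[OF assms(1) finite_P] finite_set_mult[OF finite_P assms(1)]
    by (auto simp: card_gt_0_iff)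
  have energy: "real q * real (card P) * (real (card ?AP) * real (card ?PA)) ^ 2
      \<le> real (card ((A <#> P) <#> A)) * (real q * real (card P) ^ 2 * (real (card ?AP) * real (card ?PA))
        + (real (card ?AP) * real (card ?PA)) ^ 2)"
    using card_set_mult_set_mult_energy_bound[OF assms(1,2)]
    by (simp add: ac_simps flip: of_nat_mult of_nat_power of_nat_add of_nat_le_iff)
  have "card A ^ 2 * card P \<le> card ?AP * sigma_count G P (set_inv A) A"
    "card A ^ 2 * card P \<le> card ?PA * sigma_count G P A (set_inv A)"
    using card_sq_mult_le_set_mult_sigma_count_right[OF subgroup_P finite_P assms(1,2)]
      card_sq_mult_le_set_mult_sigma_count_left[OF subgroup_P finite_P assms(1,2)] by auto
  then have "(card A ^ 2 * card P) * (card A ^ 2 * card P)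
      \<le> (card ?AP * sigma_count G P (set_inv A) A) * (card ?PA * sigma_count G P A (set_inv A))"
    by (rule mult_le_mono)
  then have "card A ^ 4 * card P ^ 2 \<le> (card ?AP * card ?PA)
      * (sigma_count G P (set_inv A) A * sigma_count G P A (set_inv A))"
    by (simp add: power2_eq_square power4_eq_xxxx ac_simps)
  then have coset_pairs: "real (card A) ^ 4 * real (card P) ^ 2 \<le> (real (card ?AP) * real (card ?PA))
      * (real (sigma_count G P (set_inv A) A) * real (sigma_count G P A (set_inv A)))"
    by (simp flip: of_nat_mult of_nat_power of_nat_le_iff)
  show ?thesis
    using quarter_min_le_of_energy_bounds[OF _ _ _ _ _ coset_pairs energy] pos card_P_pos q_pos by simp
qed

end

section \<open>BN-pairs: Bruhat cells and word length\<close>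

locale bn_pair = group G for G (structure) +
  fixes B N S :: "'a set"
  assumes subgroup_B: "subgroup B G" and subgroup_N: "subgroup N G"
    and generate_B_N: "generate G (B \<union> N) = carrier G"
    and normal_B_inter_N: "B \<inter> N \<lhd> G\<lparr>carrier := N\<rparr>"
    and S_subset_N: "S \<subseteq> N" and S_square: "\<And>s. s \<in> S \<Longrightarrow> s \<otimes> s \<in> B \<inter> N"
    and generate_Weyl: "generate (G\<lparr>carrier := N\<rparr> Mod (B \<inter> N)) ((\<lambda>s. (B \<inter> N) #> s) ` S)
        = carrier (G\<lparr>carrier := N\<rparr> Mod (B \<inter> N))"
    and S_B_N_subset: "\<And>s n. \<lbrakk>s \<in> S; n \<in> N\<rbrakk> \<Longrightarrow>
        ({s} <#> B) <#> {n} \<subseteq> ((B <#> {n}) <#> B) \<union> ((B <#> {s \<otimes> n}) <#> B)"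
begin

abbreviation H :: "'a set" where "H \<equiv> B \<inter> N"

lemma B_carrier [simp]: "b \<in> B \<Longrightarrow> b \<in> carrier G"
  using subgroup.mem_carrier[OF subgroup_B] .

lemma N_carrier [simp]: "n \<in> N \<Longrightarrow> n \<in> carrier G"
  using subgroup.mem_carrier[OF subgroup_N] .

lemma S_in_N [simp]: "s \<in> S \<Longrightarrow> s \<in> N"
  using S_subset_N by auto

lemma B_mult [simp, intro]: "a \<in> B \<Longrightarrow> b \<in> B \<Longrightarrow> a \<otimes> b \<in> B"
  using subgroup.m_closed[OF subgroup_B] .

lemma B_inv [simp, intro]: "b \<in> B \<Longrightarrow> inv b \<in> B"
  using subgroup.m_inv_closed[OF subgroup_B] .

lemma B_one [simp, intro]: "\<one> \<in> B"
  using subgroup.one_closed[OF subgroup_B] .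

lemma N_mult [simp, intro]: "a \<in> N \<Longrightarrow> b \<in> N \<Longrightarrow> a \<otimes> b \<in> N"
  using subgroup.m_closed[OF subgroup_N] .

lemma N_inv [simp, intro]: "n \<in> N \<Longrightarrow> inv n \<in> N"
  using subgroup.m_inv_closed[OF subgroup_N] .

lemma N_one [simp, intro]: "\<one> \<in> N"
  using subgroup.one_closed[OF subgroup_N] .

lemma H_conj_closed: "n \<in> N \<Longrightarrow> h \<in> H \<Longrightarrow> n \<otimes> h \<otimes> inv n \<in> H"
proof -
  assume n: "n \<in> N" and h: "h \<in> H"
  interpret Nsub: normal H "G\<lparr>carrier := N\<rparr>" by (rule normal_B_inter_N)
  have "n \<otimes>\<^bsub>G\<lparr>carrier := N\<rparr>\<^esub> h \<otimes>\<^bsub>G\<lparr>carrier := N\<rparr>\<^esub> inv\<^bsub>G\<lparr>carrier := N\<rparr>\<^esub> n \<in> H"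
    using Nsub.inv_op_closed2[of n h] n h by simp
  then show ?thesis using m_inv_consistent[OF subgroup_N n] by simp
qed

lemma H_conj_closed': "n \<in> N \<Longrightarrow> h \<in> H \<Longrightarrow> inv n \<otimes> h \<otimes> n \<in> H"
  using H_conj_closed[of "inv n" h] by simp

lemma inv_S_square_H: "s \<in> S \<Longrightarrow> inv (s \<otimes> s) \<in> H"
  using S_square[of s] by auto

lemma inv_S_eq_mult_H: "s \<in> S \<Longrightarrow> inv s = s \<otimes> inv (s \<otimes> s)"
  by (simp add: inv_mult_group m_assoc[symmetric])

lemma inv_S_eq_H_mult: "s \<in> S \<Longrightarrow> inv s = inv (s \<otimes> s) \<otimes> s"
  by (simp add: inv_mult_group m_assoc)

definition cell :: "'a \<Rightarrow> 'a set" where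
  "cell n = {x. \<exists>b\<in>B. \<exists>b'\<in>B. x = b \<otimes> n \<otimes> b'}"

lemma cell_refl: "n \<in> carrier G \<Longrightarrow> n \<in> cell n"
  unfolding cell_def by (rule CollectI, rule bexI[of _ \<one>], rule bexI[of _ \<one>]) auto

lemma cell_carrier: "x \<in> cell n \<Longrightarrow> n \<in> carrier G \<Longrightarrow> x \<in> carrier G"
  unfolding cell_def by auto

lemma cell_B: "x \<in> cell b \<Longrightarrow> b \<in> B \<Longrightarrow> x \<in> B"
  unfolding cell_def by auto

lemma B_mult_cell: "x \<in> cell n \<Longrightarrow> b \<in> B \<Longrightarrow> n \<in> carrier G \<Longrightarrow> b \<otimes> x \<in> cell n"
  unfolding cell_def by (auto simp: m_assoc) (metis B_carrier B_mult m_assoc m_closed)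

lemma cell_mult_B: "x \<in> cell n \<Longrightarrow> b \<in> B \<Longrightarrow> n \<in> carrier G \<Longrightarrow> x \<otimes> b \<in> cell n"
  unfolding cell_def by (auto simp: m_assoc) (metis B_carrier B_mult m_assoc m_closed)

lemma cell_sym: "x \<in> cell n \<Longrightarrow> n \<in> carrier G \<Longrightarrow> n \<in> cell x"
proof -
  assume "x \<in> cell n" "n \<in> carrier G"
  then obtain b b' where b: "b \<in> B" "b' \<in> B" "x = b \<otimes> n \<otimes> b'" unfolding cell_def by auto
  have "n = inv b \<otimes> x \<otimes> inv b'" using b \<open>n \<in> carrier G\<close> by (simp add: m_assoc)
  then show ?thesis unfolding cell_def using b by blast
qed

lemma cell_inv: "x \<in> cell n \<Longrightarrow> n \<in> carrier G \<Longrightarrow> inv x \<in> cell (inv n)"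
proof -
  assume "x \<in> cell n" "n \<in> carrier G"
  then obtain b b' where b: "b \<in> B" "b' \<in> B" "x = b \<otimes> n \<otimes> b'" unfolding cell_def by auto
  have "inv x = inv b' \<otimes> inv n \<otimes> inv b" using b \<open>n \<in> carrier G\<close> by (simp add: inv_mult_group m_assoc)
  then show ?thesis unfolding cell_def using b by blast
qed

lemma cell_rep_mult_B: "x \<in> cell n \<Longrightarrow> n \<in> carrier G \<Longrightarrow> h \<in> B \<Longrightarrow> x \<in> cell (n \<otimes> h)"
proof -
  assume "x \<in> cell n" "n \<in> carrier G" "h \<in> B"
  then obtain b b' where b: "b \<in> B" "b' \<in> B" "x = b \<otimes> n \<otimes> b'" unfolding cell_def by auto
  have "x = b \<otimes> (n \<otimes> h) \<otimes> (inv h \<otimes> b')" using b \<open>n \<in> carrier G\<close> \<open>h \<in> B\<close> by (simp add: m_assoc)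
  then show ?thesis unfolding cell_def using b \<open>h \<in> B\<close> by blast
qed

lemma S_B_N_cell: "s \<in> S \<Longrightarrow> n \<in> N \<Longrightarrow> b \<in> B \<Longrightarrow> s \<otimes> b \<otimes> n \<in> cell n \<or> s \<otimes> b \<otimes> n \<in> cell (s \<otimes> n)"
proof -
  assume s: "s \<in> S" and n: "n \<in> N" and b: "b \<in> B"
  have "s \<otimes> b \<otimes> n \<in> ({s} <#> B) <#> {n}" unfolding set_mult_def using b by blast
  then have "s \<otimes> b \<otimes> n \<in> ((B <#> {n}) <#> B) \<union> ((B <#> {s \<otimes> n}) <#> B)" using S_B_N_subset s n by blast
  then show ?thesis unfolding set_mult_def cell_def by blast
qed

lemma inv_S_B_N_cell:
  "s \<in> S \<Longrightarrow> n \<in> N \<Longrightarrow> b \<in> B \<Longrightarrow> inv s \<otimes> b \<otimes> n \<in> cell n \<or> inv s \<otimes> b \<otimes> n \<in> cell (s \<otimes> n)"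
proof -
  assume s: "s \<in> S" and n: "n \<in> N" and b: "b \<in> B"
  have "inv s \<otimes> b \<otimes> n = s \<otimes> (inv (s \<otimes> s) \<otimes> b) \<otimes> n"
    using s b n by (simp add: inv_S_eq_mult_H[OF s] m_assoc)
  then show ?thesis using S_B_N_cell[OF s n, of "inv (s \<otimes> s) \<otimes> b"] inv_S_square_H[OF s] b by auto
qed

lemma N_B_S_cell: "t \<in> S \<Longrightarrow> n \<in> N \<Longrightarrow> b \<in> B \<Longrightarrow> n \<otimes> b \<otimes> t \<in> cell n \<or> n \<otimes> b \<otimes> t \<in> cell (n \<otimes> t)"
proof -
  assume t: "t \<in> S" and n: "n \<in> N" and b: "b \<in> B"
  have "inv (n \<otimes> b \<otimes> t) = inv t \<otimes> inv b \<otimes> inv n" using t n b by (simp add: inv_mult_group m_assoc)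
  then have "inv (n \<otimes> b \<otimes> t) \<in> cell (inv n) \<or> inv (n \<otimes> b \<otimes> t) \<in> cell (t \<otimes> inv n)"
    using inv_S_B_N_cell[OF t, of "inv n" "inv b"] n b by simp
  then show ?thesis
  proof
    assume "inv (n \<otimes> b \<otimes> t) \<in> cell (inv n)"
    from cell_inv[OF this] show ?thesis using t n b by simp
  next
    assume "inv (n \<otimes> b \<otimes> t) \<in> cell (t \<otimes> inv n)"
    from cell_inv[OF this] have "n \<otimes> b \<otimes> t \<in> cell (n \<otimes> inv t)" using t n b by (simp add: inv_mult_group)
    from cell_rep_mult_B[OF this _, of "t \<otimes> t"] have "n \<otimes> b \<otimes> t \<in> cell (n \<otimes> inv t \<otimes> (t \<otimes> t))"
      using t n S_square[OF t] by auto
    moreover have "n \<otimes> inv t \<otimes> (t \<otimes> t) = n \<otimes> t" using t n by (simp add: m_assoc)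
    ultimately show ?thesis by simp
  qed
qed

primrec words :: "nat \<Rightarrow> 'a set" where
  "words 0 = H"
| "words (Suc k) = {s \<otimes> w | s w. s \<in> S \<and> w \<in> words k}"

lemma words_N: "w \<in> words k \<Longrightarrow> w \<in> N"
  by (induction k arbitrary: w) auto

lemma words_carrier [simp]: "w \<in> words k \<Longrightarrow> w \<in> carrier G"
  using words_N N_carrier by blast

lemma words_mult_H: "w \<in> words k \<Longrightarrow> h \<in> H \<Longrightarrow> w \<otimes> h \<in> words k"
proof (induction k arbitrary: w)
  case 0 then show ?case by auto
next
  case (Suc k)
  then obtain s w' where sw: "s \<in> S" "w' \<in> words k" "w = s \<otimes> w'" by auto
  have "w \<otimes> h = s \<otimes> (w' \<otimes> h)" using sw Suc.prems by (simp add: m_assoc)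
  then show ?case using Suc.IH[OF sw(2) Suc.prems(2)] sw(1) by auto
qed

lemma H_mult_words: "h \<in> H \<Longrightarrow> w \<in> words k \<Longrightarrow> h \<otimes> w \<in> words k"
proof (induction k arbitrary: w h)
  case 0 then show ?case by auto
next
  case (Suc k)
  then obtain s w' where sw: "s \<in> S" "w' \<in> words k" "w = s \<otimes> w'" by auto
  have h': "inv s \<otimes> h \<otimes> s \<in> H" using H_conj_closed'[of s h] sw Suc.prems by auto
  have "h \<otimes> w = s \<otimes> ((inv s \<otimes> h \<otimes> s) \<otimes> w')" using sw Suc.prems by (simp add: m_assoc)
  then show ?case using Suc.IH[OF h' sw(2)] sw(1) by auto
qed

lemma words_mult_S: "w \<in> words k \<Longrightarrow> t \<in> S \<Longrightarrow> w \<otimes> t \<in> words (Suc k)"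
proof (induction k arbitrary: w)
  case 0
  have h: "inv t \<otimes> w \<otimes> t \<in> H" using H_conj_closed'[of t w] 0 by auto
  have "w \<otimes> t = t \<otimes> (inv t \<otimes> w \<otimes> t)" using 0 by (simp add: m_assoc)
  then have "w \<otimes> t \<in> {s \<otimes> w | s w. s \<in> S \<and> w \<in> H}" using h 0 by blast
  then show ?case by simp
next
  case (Suc k)
  then obtain s w' where sw: "s \<in> S" "w' \<in> words k" "w = s \<otimes> w'" by auto
  have "w \<otimes> t = s \<otimes> (w' \<otimes> t)" using sw Suc.prems by (simp add: m_assoc)
  then show ?case using Suc.IH[OF sw(2) Suc.prems(2)] sw(1) by auto
qed

lemma words_Suc_right: "w \<in> words (Suc k) \<Longrightarrow> \<exists>w'\<in>words k. \<exists>t\<in>S. w = w' \<otimes> t"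
proof (induction k arbitrary: w)
  case 0
  then obtain s h where sh: "s \<in> S" "h \<in> H" "w = s \<otimes> h" by auto
  have h': "s \<otimes> h \<otimes> inv s \<in> H" using H_conj_closed[of s h] sh by auto
  have "w = (s \<otimes> h \<otimes> inv s) \<otimes> s" using sh by (simp add: m_assoc)
  then show ?case using h' sh by auto
next
  case (Suc k)
  then obtain s w1 where sw: "s \<in> S" "w1 \<in> words (Suc k)" "w = s \<otimes> w1" by auto
  from Suc.IH[OF sw(2)] obtain w' t where wt: "w' \<in> words k" "t \<in> S" "w1 = w' \<otimes> t" by auto
  have "w = (s \<otimes> w') \<otimes> t" using sw wt by (simp add: m_assoc)
  moreover have "s \<otimes> w' \<in> words (Suc k)" using sw wt by auto
  ultimately show ?case using wt by blast
qed

lemma words_mult: "w \<in> words k \<Longrightarrow> v \<in> words j \<Longrightarrow> w \<otimes> v \<in> words (k + j)"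
proof (induction k arbitrary: w)
  case 0 then show ?case using H_mult_words by auto
next
  case (Suc k)
  then obtain s w' where sw: "s \<in> S" "w' \<in> words k" "w = s \<otimes> w'" by auto
  have "w \<otimes> v = s \<otimes> (w' \<otimes> v)" using sw Suc.prems by (simp add: m_assoc)
  then show ?case using Suc.IH[OF sw(2) Suc.prems(2)] sw(1) by auto
qed

lemma S_words: "s \<in> S \<Longrightarrow> s \<in> words 1"
  using words_mult_S[of \<one> 0 s] by simp

lemma inv_S_words: "s \<in> S \<Longrightarrow> inv s \<in> words 1"
  using words_mult_S[of "inv (s \<otimes> s)" 0 s] inv_S_square_H inv_S_eq_H_mult by simp

lemma r_coset_N_eq: "r_coset (G\<lparr>carrier := N\<rparr>) = r_coset G"
  by (intro ext) (simp add: r_coset_def)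

lemma generate_Weyl_coset_words:
  assumes "C \<in> generate (G\<lparr>carrier := N\<rparr> Mod H) ((\<lambda>s. H #> s) ` S)"
  shows "\<exists>k. \<exists>w\<in>words k. C = H #> w"
proof -
  let ?N = "G\<lparr>carrier := N\<rparr>"
  interpret Nsub: normal H ?N by (rule normal_B_inter_N)
  show ?thesis
    using assms
  proof (induction rule: generate.induct)
    case one
    have "H #> \<one> = H" by (rule coset_mult_one) auto
    then show ?case by (metis words.simps(1) one_FactGroup B_one N_one IntI)
  next
    case (incl C)
    then show ?case using S_words by blast
  next
    case (inv C)
    then obtain s where s: "s \<in> S" "C = H #> s" by auto
    have "C \<in> carrier (?N Mod H)" using s unfolding FactGroup_def RCOSETS_def r_coset_N_eq by auto
    then have "inv\<^bsub>?N Mod H\<^esub> C = set_inv\<^bsub>?N\<^esub> C" by (rule Nsub.inv_FactGroup)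
    also have "\<dots> = H #>\<^bsub>?N\<^esub> inv\<^bsub>?N\<^esub> s" unfolding s(2) r_coset_N_eq[symmetric]
      by (rule Nsub.rcos_inv) (use s in auto)
    also have "\<dots> = H #> inv s" using s by (simp add: r_coset_N_eq m_inv_consistent[OF subgroup_N])
    finally show ?case using inv_S_words[OF s(1)] by blast
  next
    case (eng C D)
    then obtain k w k' w' where w: "w \<in> words k" "C = H #> w" "w' \<in> words k'" "D = H #> w'" by blast
    have "C \<otimes>\<^bsub>?N Mod H\<^esub> D = (H #>\<^bsub>?N\<^esub> w) <#>\<^bsub>?N\<^esub> (H #>\<^bsub>?N\<^esub> w')"
      by (simp add: w r_coset_N_eq)
    also have "\<dots> = H #>\<^bsub>?N\<^esub> (w \<otimes>\<^bsub>?N\<^esub> w')" by (rule Nsub.rcos_sum) (use w words_N in auto)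
    also have "\<dots> = H #> (w \<otimes> w')" by (simp add: r_coset_N_eq)
    finally show ?case using words_mult[OF w(1) w(3)] by blast
  qed
qed

lemma N_words: "n \<in> N \<Longrightarrow> \<exists>k. n \<in> words k"
proof -
  assume n: "n \<in> N"
  have "H #> n \<in> carrier (G\<lparr>carrier := N\<rparr> Mod H)"
    using n unfolding FactGroup_def RCOSETS_def r_coset_N_eq by auto
  then obtain k w where w: "w \<in> words k" "H #> n = H #> w"
    using generate_Weyl_coset_words generate_Weyl by metis
  have "n \<in> H #> n" using n by (intro rcos_self) (auto intro: subgroups_Inter_pair subgroup_B subgroup_N)
  then obtain h where "h \<in> H" "n = h \<otimes> w" using w unfolding r_coset_def by auto
  then show ?thesis using H_mult_words[OF _ w(1)] by auto
qed

text \<open>Only meaningful on \<open>N\<close>: outside \<open>N\<close> the \<open>LEAST\<close> ranges over an empty set.\<close>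

definition word_length :: "'a \<Rightarrow> nat" where
  "word_length n = (LEAST k. n \<in> words k)"

lemma words_word_length: "n \<in> N \<Longrightarrow> n \<in> words (word_length n)"
  unfolding word_length_def using N_words by (metis LeastI_ex)

lemma word_length_le: "n \<in> words k \<Longrightarrow> word_length n \<le> k"
  unfolding word_length_def by (rule Least_le)

lemma word_length_0: "n \<in> N \<Longrightarrow> word_length n = 0 \<Longrightarrow> n \<in> H"
  using words_word_length[of n] by simp

lemma word_length_S_mult_le: "s \<in> S \<Longrightarrow> n \<in> N \<Longrightarrow> word_length (s \<otimes> n) \<le> Suc (word_length n)"
  using words_word_length[of n] by (intro word_length_le) auto

lemma word_length_le_S_mult: "s \<in> S \<Longrightarrow> n \<in> N \<Longrightarrow> word_length n \<le> Suc (word_length (s \<otimes> n))"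
  using words_mult[OF inv_S_words words_word_length, of s "s \<otimes> n"] by (intro word_length_le) simp

lemma word_length_mult_S_le: "t \<in> S \<Longrightarrow> n \<in> N \<Longrightarrow> word_length (n \<otimes> t) \<le> Suc (word_length n)"
  using words_word_length[of n] by (intro word_length_le words_mult_S) auto

lemma word_length_mult_H: "h \<in> H \<Longrightarrow> n \<in> N \<Longrightarrow> word_length (n \<otimes> h) = word_length n"
proof -
  assume h: "h \<in> H" and n: "n \<in> N"
  have "word_length (n \<otimes> h) \<le> word_length n" by (intro word_length_le words_mult_H words_word_length n h)
  moreover have "(n \<otimes> h) \<otimes> inv h \<in> words (word_length (n \<otimes> h))"
    by (intro words_mult_H words_word_length) (use n h in auto)
  then have "word_length n \<le> word_length (n \<otimes> h)" using n h by (intro word_length_le) (simp add: m_assoc)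
  ultimately show ?thesis by simp
qed

lemma word_length_Suc_left:
  "n \<in> N \<Longrightarrow> word_length n = Suc k \<Longrightarrow> \<exists>s\<in>S. \<exists>m\<in>N. n = s \<otimes> m \<and> word_length m = k"
proof -
  assume n: "n \<in> N" and l: "word_length n = Suc k"
  from words_word_length[OF n] l obtain s m where sm: "s \<in> S" "m \<in> words k" "n = s \<otimes> m" by auto
  have "word_length m \<le> k" using sm by (intro word_length_le)
  moreover have "word_length n \<le> Suc (word_length m)" using sm word_length_S_mult_le[of s m] words_N by auto
  ultimately show ?thesis using sm l words_N by auto
qed

lemma word_length_Suc_right:
  "n \<in> N \<Longrightarrow> word_length n = Suc k \<Longrightarrow> \<exists>t\<in>S. \<exists>m\<in>N. n = m \<otimes> t \<and> word_length m = k"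
proof -
  assume n: "n \<in> N" and l: "word_length n = Suc k"
  from words_word_length[OF n] l words_Suc_right obtain t m where tm: "t \<in> S" "m \<in> words k" "n = m \<otimes> t"
    by metis
  have "word_length m \<le> k" using tm by (intro word_length_le)
  moreover have "word_length n \<le> Suc (word_length m)" using tm word_length_mult_S_le[of t m] words_N by auto
  ultimately show ?thesis using tm l words_N by auto
qed

lemma words_mult_cell: "w \<in> words k \<Longrightarrow> m \<in> N \<Longrightarrow> y \<in> cell m \<Longrightarrow> \<exists>m'\<in>N. w \<otimes> y \<in> cell m'"
proof (induction k arbitrary: w)
  case 0 then show ?case using B_mult_cell[of y m w] by auto
next
  case (Suc k)
  then obtain s v where sv: "s \<in> S" "v \<in> words k" "w = s \<otimes> v" by auto
  from Suc.IH[OF sv(2) Suc.prems(2,3)] obtain m' where m': "m' \<in> N" "v \<otimes> y \<in> cell m'" by auto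
  then obtain b b' where b: "b \<in> B" "b' \<in> B" "v \<otimes> y = b \<otimes> m' \<otimes> b'" unfolding cell_def by auto
  have y: "y \<in> carrier G" using cell_carrier Suc.prems by auto
  have "w \<otimes> y = (s \<otimes> b \<otimes> m') \<otimes> b'" using sv b y m' by (simp add: m_assoc)
  with S_B_N_cell[OF sv(1) m'(1) b(1)] show ?case
    using cell_mult_B b(2) m'(1) sv(1) by (metis N_mult S_in_N N_carrier)
qed

lemma generate_mult_cell:
  assumes "z \<in> generate G (B \<union> N)" "m \<in> N" "y \<in> cell m"
  shows "\<exists>m'\<in>N. z \<otimes> y \<in> cell m'"
  using assms
proof (induction arbitrary: m y rule: generate.induct)
  case one
  then show ?case using cell_carrier by auto
next
  case (incl h)
  show ?case
  proof (cases "h \<in> B")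
    case True
    then show ?thesis using incl B_mult_cell[of y m h] by auto
  next
    case False
    then have "h \<in> N" using incl by auto
    from words_word_length[OF this] words_mult_cell incl show ?thesis by blast
  qed
next
  case (inv h)
  show ?case
  proof (cases "h \<in> B")
    case True
    then show ?thesis using inv B_mult_cell[of y m "inv h"] by auto
  next
    case False
    then have "inv h \<in> N" using inv by auto
    from words_word_length[OF this] words_mult_cell inv show ?thesis by blast
  qed
next
  case (eng h1 h2)
  have c: "h1 \<in> carrier G" "h2 \<in> carrier G" "y \<in> carrier G"
    using eng generate_B_N cell_carrier by auto
  obtain m' where "m' \<in> N" "h2 \<otimes> y \<in> cell m'" using eng.IH(2)[OF eng.prems] by blast
  from eng.IH(1)[OF this] show ?case using c by (simp add: m_assoc)
qed

theorem bruhat_decomposition: "x \<in> carrier G \<Longrightarrow> \<exists>n\<in>N. x \<in> cell n"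
  using generate_mult_cell[of x \<one> \<one>] generate_B_N cell_refl[of \<one>] by auto

lemma cell_N_inv_mult_B:
  "n \<in> N \<Longrightarrow> n' \<in> N \<Longrightarrow> n \<in> cell n' \<Longrightarrow> word_length n \<le> word_length n' \<Longrightarrow> inv n' \<otimes> n \<in> B"
proof (induction "word_length n" arbitrary: n n')
  case 0
  then have "n \<in> B" using word_length_0 by auto
  moreover have "n' \<in> cell n" using cell_sym 0 by auto
  ultimately have "n' \<in> B" using cell_B by auto
  then show ?case using \<open>n \<in> B\<close> by auto
next
  case (Suc k)
  from word_length_Suc_left[OF Suc.prems(1) Suc.hyps(2)[symmetric]]
  obtain s m where sm: "s \<in> S" "m \<in> N" "n = s \<otimes> m" "word_length m = k" by auto
  from Suc.prems(3) obtain b b' where b: "b \<in> B" "b' \<in> B" "n = b \<otimes> n' \<otimes> b'" unfolding cell_def by auto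
  have m_eq: "m = (inv s \<otimes> b \<otimes> n') \<otimes> b'"
  proof -
    have "m = inv s \<otimes> n" using sm by simp
    then show ?thesis using b sm Suc.prems by (simp add: m_assoc)
  qed
  have "inv s \<otimes> b \<otimes> n' \<in> cell n' \<or> inv s \<otimes> b \<otimes> n' \<in> cell (s \<otimes> n')"
    by (rule inv_S_B_N_cell) (use sm b Suc.prems in auto)
  then have "m \<in> cell n' \<or> m \<in> cell (s \<otimes> n')"
    unfolding m_eq using cell_mult_B b sm Suc.prems by (meson N_carrier N_mult S_in_N)
  then show ?case
  proof
    assume m: "m \<in> cell n'"
    have "word_length m \<le> word_length n'" using sm Suc by simp
    then have "inv n' \<otimes> m \<in> B" using Suc.hyps(1)[OF sm(4)[symmetric] sm(2) Suc.prems(2) m] by simp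
    then have "inv n' \<otimes> m \<in> H" using sm Suc.prems by auto
    from word_length_mult_H[OF this Suc.prems(2)] have "word_length m = word_length n'"
      using sm Suc.prems by simp
    then show ?thesis using Suc sm by simp
  next
    assume m: "m \<in> cell (s \<otimes> n')"
    have "word_length m \<le> word_length (s \<otimes> n')"
      using word_length_le_S_mult[OF sm(1) Suc.prems(2)] Suc sm by simp
    then have i: "inv (s \<otimes> n') \<otimes> m \<in> B"
      using Suc.hyps(1)[OF sm(4)[symmetric] sm(2) _ m] sm Suc.prems by auto
    let ?h = "inv (s \<otimes> s)"
    have h: "inv n' \<otimes> ?h \<otimes> n' \<in> H" using H_conj_closed'[OF Suc.prems(2) inv_S_square_H[OF sm(1)]] .
    have "inv n' \<otimes> n = inv (inv n' \<otimes> ?h \<otimes> n') \<otimes> (inv (s \<otimes> n') \<otimes> m)"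
      using sm Suc.prems by (simp add: m_assoc inv_mult_group)
    then show ?thesis using h i by auto
  qed
qed

lemma word_length_cell_N: "n \<in> N \<Longrightarrow> n' \<in> N \<Longrightarrow> n \<in> cell n' \<Longrightarrow> word_length n = word_length n'"
proof -
  assume n: "n \<in> N" "n' \<in> N" and cell: "n \<in> cell n'"
  show ?thesis
  proof (cases "word_length n \<le> word_length n'")
    case True
    have "inv n' \<otimes> n \<in> H" using cell_N_inv_mult_B[OF n cell True] n by auto
    from word_length_mult_H[OF this n(2)] show ?thesis using n by simp
  next
    case False
    have "n' \<in> cell n" using cell_sym cell n by auto
    then have "inv n \<otimes> n' \<in> H" using cell_N_inv_mult_B[OF n(2) n(1)] False n by auto
    from word_length_mult_H[OF this n(1)] show ?thesis using n by simp
  qed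
qed

lemma S_B_mult_in_cell_S_mult:
  assumes "s \<in> S" "b \<in> B" "m \<in> N" "n \<in> N" "s \<otimes> b \<otimes> m \<in> cell (s \<otimes> n)"
  shows "n \<in> cell m \<or> n \<in> cell (s \<otimes> m)"
proof -
  have c: "s \<in> carrier G" "b \<in> carrier G" "m \<in> carrier G" "n \<in> carrier G" using assms by auto
  have "s \<otimes> n \<in> cell (s \<otimes> b \<otimes> m)" using cell_sym assms by simp
  then obtain d1 d2 where d: "d1 \<in> B" "d2 \<in> B" "s \<otimes> n = d1 \<otimes> (s \<otimes> b \<otimes> m) \<otimes> d2"
    unfolding cell_def by auto
  have n_eq: "n = (inv s \<otimes> d1 \<otimes> s \<otimes> b) \<otimes> m \<otimes> d2"
  proof -
    have "n = inv s \<otimes> (s \<otimes> n)" using c by simp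
    also have "\<dots> = inv s \<otimes> (d1 \<otimes> (s \<otimes> b \<otimes> m) \<otimes> d2)" using d by simp
    finally show ?thesis using c d by (simp add: m_assoc)
  qed
  have "inv s \<otimes> d1 \<otimes> s \<in> cell s \<or> inv s \<otimes> d1 \<otimes> s \<in> cell (s \<otimes> s)"
    by (rule inv_S_B_N_cell) (use assms d in auto)
  then show ?thesis
  proof
    assume "inv s \<otimes> d1 \<otimes> s \<in> cell (s \<otimes> s)"
    then have "inv s \<otimes> d1 \<otimes> s \<in> B" using cell_B S_square assms(1) by blast
    then have "n \<in> cell m" unfolding cell_def n_eq using d assms by blast
    then show ?thesis ..
  next
    assume "inv s \<otimes> d1 \<otimes> s \<in> cell s"
    then obtain e1 e2 where e: "e1 \<in> B" "e2 \<in> B" "inv s \<otimes> d1 \<otimes> s = e1 \<otimes> s \<otimes> e2"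
      unfolding cell_def by auto
    have n_eq': "n = e1 \<otimes> (s \<otimes> (e2 \<otimes> b) \<otimes> m) \<otimes> d2"
      unfolding n_eq e(3) using e c d by (simp add: m_assoc)
    have "s \<otimes> (e2 \<otimes> b) \<otimes> m \<in> cell m \<or> s \<otimes> (e2 \<otimes> b) \<otimes> m \<in> cell (s \<otimes> m)"
      by (rule S_B_N_cell) (use assms e in auto)
    then show ?thesis unfolding n_eq' using B_mult_cell cell_mult_B e d c by (meson m_closed)
  qed
qed

lemma S_B_mult_cell:
  "m \<in> N \<Longrightarrow> s \<in> S \<Longrightarrow> b \<in> B \<Longrightarrow> word_length m < word_length (s \<otimes> m) \<Longrightarrow> s \<otimes> b \<otimes> m \<in> cell (s \<otimes> m)"
proof (induction "word_length m" arbitrary: m)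
  case 0
  then have m: "m \<in> B" using word_length_0 by auto
  have "s \<otimes> b \<otimes> m = \<one> \<otimes> (s \<otimes> m) \<otimes> (inv m \<otimes> b \<otimes> m)" using 0 m by (simp add: m_assoc)
  moreover have "inv m \<otimes> b \<otimes> m \<in> B" using m 0 by auto
  ultimately show ?case unfolding cell_def by blast
next
  case (Suc k)
  from word_length_Suc_right[OF Suc.prems(1) Suc.hyps(2)[symmetric]]
  obtain t m' where tm: "t \<in> S" "m' \<in> N" "m = m' \<otimes> t" "word_length m' = k" by auto
  have c: "s \<in> carrier G" "b \<in> carrier G" "t \<in> carrier G" "m' \<in> carrier G" "m \<in> carrier G"
    using tm Suc.prems by auto
  have sm: "s \<otimes> m = (s \<otimes> m') \<otimes> t" using tm c by (simp add: m_assoc)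
  have "word_length (s \<otimes> m) \<le> Suc (word_length (s \<otimes> m'))"
    unfolding sm by (rule word_length_mult_S_le) (use tm Suc.prems in auto)
  then have "word_length m' < word_length (s \<otimes> m')" using Suc tm by simp
  from Suc.hyps(1)[OF tm(4)[symmetric] tm(2) Suc.prems(2,3) this] obtain c1 c2 where
    c12: "c1 \<in> B" "c2 \<in> B" "s \<otimes> b \<otimes> m' = c1 \<otimes> (s \<otimes> m') \<otimes> c2" unfolding cell_def by auto
  have sbm: "s \<otimes> b \<otimes> m = c1 \<otimes> ((s \<otimes> m') \<otimes> c2 \<otimes> t)"
  proof -
    have "s \<otimes> b \<otimes> m = (s \<otimes> b \<otimes> m') \<otimes> t" using tm c by (simp add: m_assoc)
    then show ?thesis using c12 c by (simp add: m_assoc)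
  qed
  have "(s \<otimes> m') \<otimes> c2 \<otimes> t \<in> cell (s \<otimes> m') \<or> (s \<otimes> m') \<otimes> c2 \<otimes> t \<in> cell ((s \<otimes> m') \<otimes> t)"
    by (rule N_B_S_cell) (use tm c12 Suc.prems in auto)
  then show ?case
  proof
    assume "(s \<otimes> m') \<otimes> c2 \<otimes> t \<in> cell ((s \<otimes> m') \<otimes> t)"
    then show ?thesis unfolding sbm sm[symmetric] using B_mult_cell c12(1) c by simp
  next
    assume "(s \<otimes> m') \<otimes> c2 \<otimes> t \<in> cell (s \<otimes> m')"
    then have "s \<otimes> b \<otimes> m \<in> cell (s \<otimes> m')" unfolding sbm using B_mult_cell c12(1) c by simp
    then have "m' \<in> cell m \<or> m' \<in> cell (s \<otimes> m)" using S_B_mult_in_cell_S_mult Suc.prems tm by blast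
    then have "word_length m' = word_length m \<or> word_length m' = word_length (s \<otimes> m)"
      using word_length_cell_N tm Suc.prems by (meson N_mult S_in_N)
    then show ?thesis using Suc tm by auto
  qed
qed

end

section \<open>Finite BN-pairs and parabolic subgroups\<close>

locale finite_bn_pair = bn_pair +
  fixes q :: nat
  assumes finite_carrier: "finite (carrier G)"
    and card_B_S_B: "\<And>s. s \<in> S \<Longrightarrow> q * card B \<le> card ((B <#> {s}) <#> B)"
begin

lemma finite_B: "finite B"
  using finite_subset[OF subgroup.subset[OF subgroup_B] finite_carrier] .

lemma card_B_conj_S_le: "s \<in> S \<Longrightarrow> q * card {b \<in> B. inv s \<otimes> b \<otimes> s \<in> B} \<le> card B"
proof -
  assume s: "s \<in> S"
  let ?C = "{b \<in> B. inv s \<otimes> b \<otimes> s \<in> B}"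
  have "B <#> {s} \<subseteq> B #> inv s"
  proof
    fix x assume "x \<in> B <#> {s}"
    then obtain b where b: "b \<in> B" "x = b \<otimes> s" unfolding set_mult_def by auto
    then have "x = (b \<otimes> (s \<otimes> s)) \<otimes> inv s" using s by (simp add: m_assoc)
    moreover have "b \<otimes> (s \<otimes> s) \<in> B" using b S_square[OF s] by auto
    ultimately show "x \<in> B #> inv s" unfolding r_coset_def by auto
  qed
  then have "(B <#> {s}) <#> B \<subseteq> (B #> inv s) <#> B" by (rule mono_set_mult) simp
  moreover have "finite ((B #> inv s) <#> B)"
    unfolding r_coset_def using finite_B by (intro finite_set_mult) auto
  ultimately have "q * card B \<le> card ((B #> inv s) <#> B)"
    using card_B_S_B[OF s] card_mono le_trans by blast
  then have "q * card B * card ?C \<le> card ((B #> inv s) <#> B) * card ?C" by (rule mult_le_mono1)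
  also have "\<dots> = card B * card B"
    using card_double_coset[OF subgroup_B subgroup_B finite_B finite_B, of "inv s"] s by simp
  finally show ?thesis using finite_B B_one by (auto simp: card_gt_0_iff ac_simps)
qed

lemma card_B_conj_double_coset:
  assumes "subgroup P G" "x \<in> carrier G" "b \<in> B" "p \<in> P"
  shows "card {c \<in> B. inv (b \<otimes> x \<otimes> p) \<otimes> c \<otimes> (b \<otimes> x \<otimes> p) \<in> P} = card {c \<in> B. inv x \<otimes> c \<otimes> x \<in> P}"
proof -
  have bp: "b \<in> carrier G" "p \<in> carrier G" using assms subgroup.mem_carrier by auto
  have conj: "inv (b \<otimes> x \<otimes> p) \<otimes> c \<otimes> (b \<otimes> x \<otimes> p) = inv p \<otimes> (inv x \<otimes> (inv b \<otimes> c \<otimes> b) \<otimes> x) \<otimes> p"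
    if "c \<in> carrier G" for c
    using that assms(2) bp by (simp add: inv_mult_group m_assoc)
  have "{c \<in> B. inv (b \<otimes> x \<otimes> p) \<otimes> c \<otimes> (b \<otimes> x \<otimes> p) \<in> P}
      = (\<lambda>c. b \<otimes> c \<otimes> inv b) ` {c \<in> B. inv x \<otimes> c \<otimes> x \<in> P}"
  proof (intro equalityI subsetI)
    fix c assume c: "c \<in> {c \<in> B. inv (b \<otimes> x \<otimes> p) \<otimes> c \<otimes> (b \<otimes> x \<otimes> p) \<in> P}"
    then have "inv b \<otimes> c \<otimes> b \<in> B" "inv x \<otimes> (inv b \<otimes> c \<otimes> b) \<otimes> x \<in> P"
      using conj[of c] subgroup_conj_mem_iff[OF assms(1,4)] assms(2,3) by auto
    moreover have "c = b \<otimes> (inv b \<otimes> c \<otimes> b) \<otimes> inv b" using c bp by (simp add: m_assoc)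
    ultimately show "c \<in> (\<lambda>c. b \<otimes> c \<otimes> inv b) ` {c \<in> B. inv x \<otimes> c \<otimes> x \<in> P}" by blast
  next
    fix c assume "c \<in> (\<lambda>c. b \<otimes> c \<otimes> inv b) ` {c \<in> B. inv x \<otimes> c \<otimes> x \<in> P}"
    then obtain c' where c': "c' \<in> B" "inv x \<otimes> c' \<otimes> x \<in> P" "c = b \<otimes> c' \<otimes> inv b" by auto
    then have "inv b \<otimes> c \<otimes> b = c'" using bp by (simp add: m_assoc)
    then show "c \<in> {c \<in> B. inv (b \<otimes> x \<otimes> p) \<otimes> c \<otimes> (b \<otimes> x \<otimes> p) \<in> P}"
      using conj[of c] c' subgroup_conj_mem_iff[OF assms(1,4)] assms(2,3) by auto
  qed
  moreover have "inj_on (\<lambda>c. b \<otimes> c \<otimes> inv b) B" using bp by (auto simp: inj_on_def)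
  ultimately show ?thesis by (simp add: card_image inj_on_subset[of _ B])
qed

lemma B_conj_subset_of_minimal:
  assumes P: "subgroup P G" "B \<subseteq> P" and n0: "n0 \<in> N"
    and sm: "s \<in> S" "m \<in> N" "n0 = s \<otimes> m" "word_length m < word_length n0"
    and minimal: "\<And>n' b p. \<lbrakk>n' \<in> N; b \<in> B; p \<in> P; n' = b \<otimes> n0 \<otimes> p\<rbrakk> \<Longrightarrow> word_length n0 \<le> word_length n'"
  shows "{b \<in> B. inv n0 \<otimes> b \<otimes> n0 \<in> P} \<subseteq> {b \<in> B. inv s \<otimes> b \<otimes> s \<in> B}"
proof (rule subsetI, rule ccontr)
  fix b assume b: "b \<in> {b \<in> B. inv n0 \<otimes> b \<otimes> n0 \<in> P}" and not_B: "b \<notin> {b \<in> B. inv s \<otimes> b \<otimes> s \<in> B}"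
  have c: "s \<in> carrier G" "m \<in> carrier G" "n0 \<in> carrier G" "b \<in> carrier G" using sm n0 b by auto
  have "inv s \<otimes> b \<otimes> s \<in> cell s \<or> inv s \<otimes> b \<otimes> s \<in> cell (s \<otimes> s)"
    by (rule inv_S_B_N_cell) (use sm b in auto)
  moreover have "inv s \<otimes> b \<otimes> s \<notin> cell (s \<otimes> s)" using not_B b cell_B S_square[OF sm(1)] by blast
  ultimately obtain c1 c2 where c12: "c1 \<in> B" "c2 \<in> B" "inv s \<otimes> b \<otimes> s = c1 \<otimes> s \<otimes> c2"
    unfolding cell_def by auto
  have "word_length m < word_length (s \<otimes> m)" using sm by simp
  from S_B_mult_cell[OF sm(2,1) c12(2) this] obtain d1 d2 where
    d: "d1 \<in> B" "d2 \<in> B" "s \<otimes> c2 \<otimes> m = d1 \<otimes> n0 \<otimes> d2" unfolding cell_def sm(3) by auto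
  define p where "p = inv n0 \<otimes> b \<otimes> n0"
  have p: "p \<in> P" "p \<in> carrier G" using b c unfolding p_def by auto
  have "m \<otimes> p = inv s \<otimes> b \<otimes> s \<otimes> m" unfolding p_def sm(3) using c by (simp add: m_assoc inv_mult_group)
  also have "\<dots> = c1 \<otimes> (s \<otimes> c2 \<otimes> m)" unfolding c12(3) using c c12 by (simp add: m_assoc)
  also have "\<dots> = c1 \<otimes> d1 \<otimes> n0 \<otimes> d2" unfolding d(3) using c c12 d by (simp add: m_assoc)
  finally have mp: "m \<otimes> p = c1 \<otimes> d1 \<otimes> n0 \<otimes> d2" .
  have "m = (m \<otimes> p) \<otimes> inv p" using c p by (simp add: m_assoc)
  also have "\<dots> = (c1 \<otimes> d1) \<otimes> n0 \<otimes> (d2 \<otimes> inv p)" unfolding mp using c c12 d p by (simp add: m_assoc)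
  finally have "m = (c1 \<otimes> d1) \<otimes> n0 \<otimes> (d2 \<otimes> inv p)" .
  moreover have "d2 \<otimes> inv p \<in> P" using d p P by (auto intro: subgroup.m_closed subgroup.m_inv_closed)
  ultimately have "word_length n0 \<le> word_length m" using minimal sm(2) c12(1) d(1) by blast
  then show False using sm(4) by simp
qed

lemma minimal_N_representative:
  assumes "subgroup P G" "n \<in> N"
  obtains n0 b0 p0 where "n0 \<in> N" "b0 \<in> B" "p0 \<in> P" "n0 = b0 \<otimes> n \<otimes> p0"
    and "\<And>n' b p. \<lbrakk>n' \<in> N; b \<in> B; p \<in> P; n' = b \<otimes> n0 \<otimes> p\<rbrakk> \<Longrightarrow> word_length n0 \<le> word_length n'"
proof -
  let ?D = "\<lambda>m. m \<in> N \<and> (\<exists>b\<in>B. \<exists>p\<in>P. m = b \<otimes> n \<otimes> p)"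
  have "?D n" using assms by (intro conjI bexI[of _ \<one>]) (auto simp: subgroup.one_closed)
  then obtain n0 where n0: "?D n0" and least: "\<And>y. ?D y \<Longrightarrow> word_length n0 \<le> word_length y"
    using ex_has_least_nat[of ?D n word_length] by metis
  from n0 obtain b0 p0 where bp: "b0 \<in> B" "p0 \<in> P" "n0 = b0 \<otimes> n \<otimes> p0" "n0 \<in> N" by auto
  have "word_length n0 \<le> word_length n'"
    if "n' \<in> N" "b \<in> B" "p \<in> P" "n' = b \<otimes> n0 \<otimes> p" for n' b p
  proof (rule least)
    have "n' = (b \<otimes> b0) \<otimes> n \<otimes> (p0 \<otimes> p)"
      using that assms(2) bp subgroup.mem_carrier[OF assms(1)] by (simp add: m_assoc)
    moreover have "b \<otimes> b0 \<in> B" "p0 \<otimes> p \<in> P" using that bp assms(1) by (auto intro: subgroup.m_closed)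
    ultimately show "?D n'" using that(1) by blast
  qed
  with bp show thesis using that by blast
qed

lemma card_B_conj_N_le:
  assumes P: "subgroup P G" "B \<subseteq> P" and n: "n \<in> N" "n \<notin> P"
  shows "q * card {b \<in> B. inv n \<otimes> b \<otimes> n \<in> P} \<le> card B"
proof -
  obtain n0 b0 p0 where bp: "n0 \<in> N" "b0 \<in> B" "p0 \<in> P" "n0 = b0 \<otimes> n \<otimes> p0"
    and minimal: "\<And>n' b p. \<lbrakk>n' \<in> N; b \<in> B; p \<in> P; n' = b \<otimes> n0 \<otimes> p\<rbrakk> \<Longrightarrow> word_length n0 \<le> word_length n'"
    using minimal_N_representative[OF P(1) n(1)] by blast
  have c: "n \<in> carrier G" "b0 \<in> carrier G" "p0 \<in> carrier G" using n bp P subgroup.mem_carrier by auto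
  have same: "card {b \<in> B. inv n0 \<otimes> b \<otimes> n0 \<in> P} = card {b \<in> B. inv n \<otimes> b \<otimes> n \<in> P}"
    unfolding bp(4) using card_B_conj_double_coset[OF P(1) c(1) bp(2,3)] .
  have "n0 \<notin> P"
  proof
    assume "n0 \<in> P"
    then have "inv b0 \<otimes> n0 \<otimes> inv p0 \<in> P"
      using bp P by (auto intro: subgroup.m_closed subgroup.m_inv_closed)
    then show False using n(2) c bp(4) by (simp add: m_assoc)
  qed
  then have "word_length n0 \<noteq> 0" using word_length_0 bp(1) P(2) by auto
  then obtain k where "word_length n0 = Suc k" by (cases "word_length n0") auto
  with word_length_Suc_left[OF bp(1) this]
  obtain s m where sm: "s \<in> S" "m \<in> N" "n0 = s \<otimes> m" "word_length m < word_length n0" by auto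
  have "card {b \<in> B. inv n0 \<otimes> b \<otimes> n0 \<in> P} \<le> card {b \<in> B. inv s \<otimes> b \<otimes> s \<in> B}"
    using B_conj_subset_of_minimal[OF P bp(1) sm minimal] finite_B by (intro card_mono) auto
  then have "q * card {b \<in> B. inv n0 \<otimes> b \<otimes> n0 \<in> P} \<le> q * card {b \<in> B. inv s \<otimes> b \<otimes> s \<in> B}"
    by (rule mult_le_mono2)
  also have "\<dots> \<le> card B" by (rule card_B_conj_S_le[OF sm(1)])
  finally show ?thesis using same by simp
qed

theorem card_B_conj_le:
  assumes P: "subgroup P G" "B \<subseteq> P" and x: "x \<in> carrier G" "x \<notin> P"
  shows "q * card {b \<in> B. inv x \<otimes> b \<otimes> x \<in> P} \<le> card B"
proof -
  obtain n b b' where n: "n \<in> N" "b \<in> B" "b' \<in> B" "x = b \<otimes> n \<otimes> b'"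
    using bruhat_decomposition[OF x(1)] unfolding cell_def by auto
  have "n \<notin> P"
  proof
    assume "n \<in> P"
    then have "b \<otimes> n \<otimes> b' \<in> P" using n P by (auto intro: subgroup.m_closed)
    then show False using x n by simp
  qed
  moreover have "card {c \<in> B. inv x \<otimes> c \<otimes> x \<in> P} = card {c \<in> B. inv n \<otimes> c \<otimes> n \<in> P}"
    unfolding n(4) using n P by (intro card_B_conj_double_coset) auto
  ultimately show ?thesis using card_B_conj_N_le[OF P n(1)] by simp
qed

lemma card_Borel_conj_inter_le:
  assumes P: "subgroup P G" "conj_set G c B \<subseteq> P" and c: "c \<in> carrier G"
    and g: "g \<in> carrier G" "g \<notin> P"
  shows "q * card {k \<in> conj_set G c B. g \<otimes> k \<otimes> inv g \<in> P} \<le> card B"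
proof -
  let ?P' = "conj_set G (inv c) P" and ?x = "inv c \<otimes> inv g \<otimes> c"
  have "subgroup ?P' G" using subgroup_conj_set[OF P(1)] c by simp
  moreover have "B \<subseteq> ?P'"
  proof
    fix b assume b: "b \<in> B"
    then have "c \<otimes> b \<otimes> inv c \<in> P" using P(2) unfolding conj_set_eq_image by auto
    then have "inv c \<otimes> (c \<otimes> b \<otimes> inv c) \<otimes> inv (inv c) \<in> ?P'" unfolding conj_set_eq_image by blast
    then show "b \<in> ?P'" using b c by (simp add: m_assoc)
  qed
  moreover have "?x \<notin> ?P'"
  proof
    assume "?x \<in> ?P'"
    then obtain p where p: "p \<in> P" "inv c \<otimes> inv g \<otimes> c = inv c \<otimes> p \<otimes> inv (inv c)"
      unfolding conj_set_eq_image by auto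
    then have "inv g = p" using c g subgroup.mem_carrier[OF P(1) p(1)] by (simp add: m_assoc)
    then show False using g p(1) P(1) by (metis inv_inv subgroup.m_inv_closed)
  qed
  ultimately have core: "q * card {b \<in> B. inv ?x \<otimes> b \<otimes> ?x \<in> ?P'} \<le> card B"
    using c g by (intro card_B_conj_le) auto
  have "card {k \<in> conj_set G c B. g \<otimes> k \<otimes> inv g \<in> P} \<le> card {b \<in> B. inv ?x \<otimes> b \<otimes> ?x \<in> ?P'}"
    using finite_B subgroup.subset[OF subgroup_B] c g(1) by (rule card_conj_set_inter_le)
  then have "q * card {k \<in> conj_set G c B. g \<otimes> k \<otimes> inv g \<in> P} \<le> q * card {b \<in> B. inv ?x \<otimes> b \<otimes> ?x \<in> ?P'}"
    by (rule mult_le_mono2)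
  then show ?thesis using core by linarith
qed

lemma card_double_coset_Borel:
  assumes P: "subgroup P G" "conj_set G c B \<subseteq> P" and c: "c \<in> carrier G"
    and g: "g \<in> carrier G" "g \<notin> P"
  shows "q * card P \<le> card ((P #> g) <#> conj_set G c B)"
proof -
  let ?Bo = "conj_set G c B" and ?C = "{k \<in> conj_set G c B. g \<otimes> k \<otimes> inv g \<in> P}"
  have finite: "finite P" "finite ?Bo"
    using finite_carrier P(1) subgroup_conj_set[OF subgroup_B c] finite_subset subgroup.subset by metis+
  have card_Bo: "card ?Bo = card B" using card_conj_set c subgroup.subset[OF subgroup_B] by blast
  have "card B * (q * card P) = q * card P * card ?Bo" using card_Bo by simp
  also have "\<dots> = q * (card ((P #> g) <#> ?Bo) * card ?C)"
    using card_double_coset[OF P(1) subgroup_conj_set[OF subgroup_B c] finite g(1)] by simp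
  also have "\<dots> = card ((P #> g) <#> ?Bo) * (q * card ?C)" by simp
  also have "\<dots> \<le> card ((P #> g) <#> ?Bo) * card B"
    using card_Borel_conj_inter_le[OF P c g] by simp
  finally show ?thesis using finite_B B_one by (auto simp: card_gt_0_iff mult.commute[of _ "card B"])
qed

lemma card_set_mult_Borel_ge:
  assumes P: "subgroup P G" "Bo \<subseteq> P" and A: "A \<subseteq> carrier G" "\<not> A \<subseteq> P"
    and Bo: "borel_subgroup G B Bo"
  shows "q * card P \<le> card ((P <#> A) <#> Bo)"
proof -
  obtain c where c: "c \<in> carrier G" "Bo = conj_set G c B" using Bo unfolding borel_subgroup_def by auto
  obtain g where g: "g \<in> A" "g \<notin> P" using A(2) by auto
  have "P #> g \<subseteq> P <#> A" using g(1) unfolding r_coset_eq_set_mult by (intro mono_set_mult) auto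
  then have "(P #> g) <#> Bo \<subseteq> (P <#> A) <#> Bo" by (rule mono_set_mult) simp
  moreover have "finite ((P <#> A) <#> Bo)"
    using finite_carrier set_mult_closed subgroup.subset P(1) A(1) subgroup_conj_set[OF subgroup_B c(1)] c(2)
    by (metis finite_subset)
  ultimately show ?thesis
    using card_double_coset_Borel[of P c g] P c g A(1) by (meson card_mono le_trans subsetD)
qed

lemma almost_malnormal_parabolic:
  assumes P: "subgroup P G" "conj_set G c B \<subseteq> P" and c: "c \<in> carrier G" and q: "0 < q"
  shows "almost_malnormal G P q"
proof -
  have finite_P: "finite P" using finite_carrier P(1) finite_subset subgroup.subset by metis
  have "q * card {p \<in> P. g \<otimes> p \<otimes> inv g \<in> P} \<le> card P" if g: "g \<in> carrier G" "g \<notin> P" for g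
  proof -
    let ?C = "{p \<in> P. g \<otimes> p \<otimes> inv g \<in> P}"
    have "(P #> g) <#> conj_set G c B \<subseteq> (P #> g) <#> P" using P(2) by (rule mono_set_mult[OF subset_refl])
    moreover have "finite ((P #> g) <#> P)"
      unfolding r_coset_def using finite_P by (intro finite_set_mult) auto
    ultimately have "q * card P \<le> card ((P #> g) <#> P)"
      using card_double_coset_Borel[OF P c g] by (meson card_mono le_trans)
    then have "card P * (q * card ?C) \<le> card ((P #> g) <#> P) * card ?C" by (simp add: mult_le_mono1 ac_simps)
    also have "\<dots> = card P * card P" using card_double_coset[OF P(1) P(1) finite_P finite_P g(1)] .
    finally show ?thesis using finite_P subgroup.one_closed[OF P(1)] by (auto simp: card_gt_0_iff)
  qed
  then show ?thesis
    using P(1) finite_P q by (simp add: almost_malnormal_def almost_malnormal_axioms_def is_group)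
qed

end

lemma finite_bn_pair_of_finite_BN_group_over:
  "finite_BN_group_over G B N S q \<Longrightarrow> finite_bn_pair G B N S q"
  unfolding finite_BN_group_over_def tits_system_def finite_bn_pair_def finite_bn_pair_axioms_def
    bn_pair_def bn_pair_axioms_def by auto

lemma q_pos_of_finite_BN_group_over: "finite_BN_group_over G B N S q \<Longrightarrow> 0 < q"
  unfolding finite_BN_group_over_def by (auto simp: prime_gt_0_nat)

theorem theorem12:
  fixes G :: "('a, 'b) monoid_scheme" and B N S P A :: "'a set" and q :: nat
  assumes "finite_BN_group_over G B N S q"
    and "parabolic_subgroup G B P" and "P \<noteq> carrier G"
    and "A \<subseteq> carrier G" and "A \<noteq> {}"
  shows
    "(real (card (A <#>\<^bsub>G\<^esub> P)) * real (card (A \<inter> P)) \<ge> real (card A) ^ 2 / 2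
      \<or> real (card (A <#>\<^bsub>G\<^esub> P)) * real (card (P <#>\<^bsub>G\<^esub> A))
          \<ge> real (card A) * real (card P) * real q / 4)
   \<and> real (max (card (A <#>\<^bsub>G\<^esub> P)) (card (P <#>\<^bsub>G\<^esub> A))) \<ge>
       (if A \<inter> P = {} then sqrt (real (card A) * real (card P) * real q) / 2
        else min (real (card A) ^ 2 / real (card (A \<inter> P)))
                 (sqrt (real (card A) * real (card P) * real q)) / 2)
   \<and> real (card ((A <#>\<^bsub>G\<^esub> P) <#>\<^bsub>G\<^esub> A)) \<ge>
       real (card P) / 4 * min (real q)
         (real (card A) ^ 4 /
           (real (sigma_count G P (set_inv\<^bsub>G\<^esub> A) A) * real (sigma_count G P A (set_inv\<^bsub>G\<^esub> A))))
   \<and> (\<forall>Bo. borel_subgroup G B Bo \<and> Bo \<subseteq> P \<and> \<not> A \<subseteq> P \<longrightarrow>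
         real (card ((P <#>\<^bsub>G\<^esub> A) <#>\<^bsub>G\<^esub> Bo)) \<ge> real q * real (card P))"
proof -
  interpret finite_bn_pair G B N S q
    using assms(1) by (rule finite_bn_pair_of_finite_BN_group_over)
  obtain c where P: "subgroup P G" "conj_set G c B \<subseteq> P" and c: "c \<in> carrier G"
    using assms(2) unfolding parabolic_subgroup_def borel_subgroup_def by auto
  interpret almost_malnormal G P q
    using almost_malnormal_parabolic[OF P c] q_pos_of_finite_BN_group_over[OF assms(1)] .
  have A: "finite A" using finite_carrier assms(4) finite_subset by blast
  have "real q * real (card P) \<le> real (card ((P <#>\<^bsub>G\<^esub> A) <#>\<^bsub>G\<^esub> Bo))"
    if "borel_subgroup G B Bo" "Bo \<subseteq> P" "\<not> A \<subseteq> P" for Bo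
    using card_set_mult_Borel_ge[OF P(1) that(2) assms(4) that(3,1)] by (simp flip: of_nat_mult)
  then show ?thesis
    using card_set_mult_dichotomy[OF A assms(4)] max_card_set_mult_ge[OF A assms(4,5)]
      card_set_mult_set_mult_ge[OF A assms(4,5)] by blast
qed

end
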